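(* Let $k=\mathbb{F}_q$ with $q$ a power of $2$. Every non-singular quartic plane curve $C\subseteq\mathbb{P}^2$ defined over $k$ with exactly two bitangents is $k$-isomorphic to a curve $C_Q: Q(x,y,z)^2=xy(y^2+xz)$, where $Q=ax^2+by^2+cz^2+dxy+eyz+fzx$ has coefficients in $k$ and $ac\neq0$.
   Context: Bitangents are lines in $\mathbb{P}^2$ (over $\overline{k}$) tangent to $C$ at two points or with contact of order 4. In characteristic 2 a non-singular plane quartic has 7, 4, 2 or 1 bitangents. *)

theory Defs
  imports "HOL-Computational_Algebra.Polynomial"
begin

text \<open>Points of the affine 3-space over a field (homogeneous coordinates of the plane).\<close>
type_synonym 'a pt = "'a \<times> 'a \<times> 'a"

text \<open>Ternary forms are given by coefficient functions on exponent triples.\<close>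
definition mons :: "nat \<Rightarrow> (nat \<times> nat \<times> nat) set" where
  "mons d = {(i, j, l). i + j + l = d}"

definition is_form :: "nat \<Rightarrow> (nat \<times> nat \<times> nat \<Rightarrow> 'a::zero) \<Rightarrow> bool" where
  "is_form d F \<longleftrightarrow> (\<forall>m. m \<notin> mons d \<longrightarrow> F m = 0)"

fun evf :: "(nat \<times> nat \<times> nat \<Rightarrow> 'a::comm_semiring_1) \<Rightarrow> nat \<Rightarrow> 'a pt \<Rightarrow> 'a" where
  "evf F d (x, y, z) = (\<Sum>(i, j, l)\<in>mons d. F (i, j, l) * x ^ i * y ^ j * z ^ l)"

fun dX :: "(nat \<times> nat \<times> nat \<Rightarrow> 'a::comm_semiring_1) \<Rightarrow> nat \<times> nat \<times> nat \<Rightarrow> 'a" where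
  "dX F (i, j, l) = of_nat (Suc i) * F (Suc i, j, l)"
fun dY :: "(nat \<times> nat \<times> nat \<Rightarrow> 'a::comm_semiring_1) \<Rightarrow> nat \<times> nat \<times> nat \<Rightarrow> 'a" where
  "dY F (i, j, l) = of_nat (Suc j) * F (i, Suc j, l)"
fun dZ :: "(nat \<times> nat \<times> nat \<Rightarrow> 'a::comm_semiring_1) \<Rightarrow> nat \<times> nat \<times> nat \<Rightarrow> 'a" where
  "dZ F (i, j, l) = of_nat (Suc l) * F (i, j, Suc l)"

text \<open>The quartic F = 0 is non-singular (over the ambient field, here the algebraic closure).\<close>
definition nonsingular_quartic :: "(nat \<times> nat \<times> nat \<Rightarrow> 'a::field) \<Rightarrow> bool" where
  "nonsingular_quartic F \<longleftrightarrow>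
     (\<forall>p. p \<noteq> (0, 0, 0) \<longrightarrow>
        \<not> (evf F 4 p = 0 \<and> evf (dX F) 3 p = 0 \<and> evf (dY F) 3 p = 0 \<and> evf (dZ F) 3 p = 0))"

fun restr :: "(nat \<times> nat \<times> nat \<Rightarrow> 'a::field) \<Rightarrow> 'a pt \<Rightarrow> 'a pt \<Rightarrow> 'a poly" where
  "restr F (p1, p2, p3) (r1, r2, r3) =
     (\<Sum>(i, j, l)\<in>mons 4. smult (F (i, j, l)) ([:p1, r1:] ^ i * [:p2, r2:] ^ j * [:p3, r3:] ^ l))"

text \<open>Intersection multiplicity at P of the curve with the line through P and R.\<close>
definition imult :: "(nat \<times> nat \<times> nat \<Rightarrow> 'a::field) \<Rightarrow> 'a pt \<Rightarrow> 'a pt \<Rightarrow> nat" where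
  "imult F P R = order 0 (restr F P R)"

fun on_line :: "'a::comm_semiring_1 pt \<Rightarrow> 'a pt \<Rightarrow> bool" where
  "on_line (u, v, w) (x, y, z) \<longleftrightarrow> u * x + v * y + w * z = 0"

fun scal :: "'a::comm_semiring_1 \<Rightarrow> 'a pt \<Rightarrow> 'a pt" where
  "scal c (x, y, z) = (c * x, c * y, c * z)"

fun addp :: "'a::comm_semiring_1 pt \<Rightarrow> 'a pt \<Rightarrow> 'a pt" where
  "addp (x, y, z) (x', y', z') = (x + x', y + y', z + z')"

text \<open>P and R are linearly independent, i.e. distinct points of the projective plane.\<close>
definition indep :: "'a::field pt \<Rightarrow> 'a pt \<Rightarrow> bool" where
  "indep P R \<longleftrightarrow> (\<forall>a b. addp (scal a P) (scal b R) = (0, 0, 0) \<longrightarrow> a = 0 \<and> b = 0)"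

text \<open>Bitangent line L (coefficient vector): not a component, and tangent at two distinct
  points or with contact of order (at least) 4 at one point.\<close>
definition is_bitangent :: "(nat \<times> nat \<times> nat \<Rightarrow> 'a::field) \<Rightarrow> 'a pt \<Rightarrow> bool" where
  "is_bitangent F L \<longleftrightarrow> L \<noteq> (0, 0, 0) \<and>
     (\<exists>P. on_line L P \<and> evf F 4 P \<noteq> 0) \<and>
     ((\<exists>P R. on_line L P \<and> on_line L R \<and> indep P R \<and> imult F P R \<ge> 2 \<and> imult F R P \<ge> 2) \<or>
      (\<exists>P R. on_line L P \<and> on_line L R \<and> indep P R \<and> imult F P R \<ge> 4))"

definition line_set :: "'a::comm_semiring_1 pt \<Rightarrow> 'a pt set" where
  "line_set L = {P. on_line L P}"

text \<open>The set of bitangents (as lines, i.e. point sets in the plane).\<close>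
definition bitangents :: "(nat \<times> nat \<times> nat \<Rightarrow> 'a::field) \<Rightarrow> 'a pt set set" where
  "bitangents F = {line_set L | L. is_bitangent F L}"

definition alg_closed :: "'a::field itself \<Rightarrow> bool" where
  "alg_closed _ \<longleftrightarrow> (\<forall>p :: 'a poly. degree p > 0 \<longrightarrow> (\<exists>x. poly p x = 0))"

definition is_subfield :: "'a::field set \<Rightarrow> bool" where
  "is_subfield k \<longleftrightarrow> 0 \<in> k \<and> 1 \<in> k \<and> (\<forall>x\<in>k. \<forall>y\<in>k. x + y \<in> k \<and> x * y \<in> k)
     \<and> (\<forall>x\<in>k. - x \<in> k) \<and> (\<forall>x\<in>k. x \<noteq> 0 \<longrightarrow> inverse x \<in> k)"

definition algebraic_over :: "'a::field set \<Rightarrow> 'a \<Rightarrow> bool" where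
  "algebraic_over k x \<longleftrightarrow> (\<exists>p. p \<noteq> 0 \<and> (\<forall>i. coeff p i \<in> k) \<and> poly p x = 0)"

text \<open>3x3 matrices as functions on indices 0,1,2.\<close>
definition det3 :: "(nat \<Rightarrow> nat \<Rightarrow> 'a::comm_ring_1) \<Rightarrow> 'a" where
  "det3 M = M 0 0 * (M 1 1 * M 2 2 - M 1 2 * M 2 1)
          - M 0 1 * (M 1 0 * M 2 2 - M 1 2 * M 2 0)
          + M 0 2 * (M 1 0 * M 2 1 - M 1 1 * M 2 0)"

fun mapply :: "(nat \<Rightarrow> nat \<Rightarrow> 'a::comm_semiring_1) \<Rightarrow> 'a pt \<Rightarrow> 'a pt" where
  "mapply M (x, y, z) =
     (M 0 0 * x + M 0 1 * y + M 0 2 * z,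
      M 1 0 * x + M 1 1 * y + M 1 2 * z,
      M 2 0 * x + M 2 1 * y + M 2 2 * z)"

end

theory Submission
  imports Defs
begin

(* In characteristic 2 a quartic splits as F X = Q (X^[2]) + <(yz, zx, xy), W X>, where X^[2] is the
   componentwise square, Q is a quadratic form and W X = N X^[2] for a 3x3 matrix N of coefficients
   of F. The gradient of F at X is then cross X (W X), and the restriction of F to the line through
   P and R has odd coefficients <cross P R, W P> and <cross P R, W R>. Hence the line L is a bitangent
   exactly when N^T L is proportional to L^[2] (an "eigenline").
   If there are exactly two eigenlines, they can be completed to a basis a, b, m with N^T a = a^[2],
   N^T b = 0 and N^T m = beta b^[2], beta /= 0; its dual basis q1, q2, q3 satisfies W q1 = D q1,
   W q2 = beta D q3 and W q3 = 0. As squaring is bijective on the finite field k, a basis C1, C2, C3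
   with W C1 = t C1, W C2 = t C3, W C3 = 0 can be chosen over k. In these coordinates
   F = T (Q'(x, y, z)^2 + x^2 y z + x y^3) with Q' defined over k, and non-singularity at C1 and C3
   forces a c /= 0. *)

section \<open>Vectors of the plane\<close>

abbreviation px :: "'a pt \<Rightarrow> 'a" where "px a \<equiv> fst a"
abbreviation py :: "'a pt \<Rightarrow> 'a" where "py a \<equiv> fst (snd a)"
abbreviation pz :: "'a pt \<Rightarrow> 'a" where "pz a \<equiv> snd (snd a)"

definition dot :: "'a::comm_ring_1 pt \<Rightarrow> 'a pt \<Rightarrow> 'a" where
  "dot a b = px a * px b + py a * py b + pz a * pz b"

definition cross :: "'a::comm_ring_1 pt \<Rightarrow> 'a pt \<Rightarrow> 'a pt" where
  "cross a b = (py a * pz b - pz a * py b, pz a * px b - px a * pz b, px a * py b - py a * px b)"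

definition det :: "'a::comm_ring_1 pt \<Rightarrow> 'a pt \<Rightarrow> 'a pt \<Rightarrow> 'a" where
  "det a b c = dot a (cross b c)"

definition sq :: "'a::comm_ring_1 pt \<Rightarrow> 'a pt" where
  "sq a = (px a ^ 2, py a ^ 2, pz a ^ 2)"

definition pair_prods :: "'a::comm_ring_1 pt \<Rightarrow> 'a pt" where
  "pair_prods X = (py X * pz X, px X * pz X, px X * py X)"

lemma pt_eq_iff: "(a::'a pt) = b \<longleftrightarrow> px a = px b \<and> py a = py b \<and> pz a = pz b"
  by (simp add: prod_eq_iff)

lemma addp_eq: "addp a b = (px a + px b, py a + py b, pz a + pz b)"
  by (cases a; cases b) simp

lemma scal_eq: "scal c a = (c * px a, c * py a, c * pz a)"
  by (cases a) simp

lemma on_line_iff_dot: "on_line L P \<longleftrightarrow> dot L P = 0"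
  by (cases L; cases P) (simp add: dot_def)

lemmas pt_simps = dot_def cross_def det_def sq_def pair_prods_def addp_eq scal_eq pt_eq_iff

lemma dot_commute: "dot a b = dot b a" by (simp add: pt_simps algebra_simps)
lemma cross_self: "cross a a = (0,0,0)" by (simp add: pt_simps)
lemma cross_swap: "cross b a = scal (-1) (cross a b)" by (simp add: pt_simps)
lemma cross_swap_nonzero: "cross a b \<noteq> (0,0,0) \<Longrightarrow> cross b a \<noteq> ((0,0,0)::'a::comm_ring_1 pt)"
  by (auto simp: pt_simps algebra_simps)
lemma det_swap12: "det b a c = - det a b c" by (simp add: pt_simps algebra_simps)
lemma det_self13: "det a b a = 0" by (simp add: pt_simps algebra_simps)
lemma det_self23: "det a b b = 0" by (simp add: pt_simps algebra_simps)
lemma det_nonzero: "det a b c \<noteq> 0 \<Longrightarrow> a \<noteq> (0,0,0) \<and> b \<noteq> (0,0,0) \<and> c \<noteq> ((0,0,0)::'a::comm_ring_1 pt)"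
  by (auto simp: pt_simps)

lemma cross_scal_left: "cross (scal c a) b = scal c (cross a b)" by (simp add: pt_simps algebra_simps)
lemma cross_scal_right: "cross a (scal c b) = scal c (cross a b)" by (simp add: pt_simps algebra_simps)
lemma cross_addp_left: "cross (addp a a') b = addp (cross a b) (cross a' b)" by (simp add: pt_simps algebra_simps)
lemma dot_scal_left: "dot (scal c a) b = c * dot a b" by (simp add: pt_simps algebra_simps)
lemma dot_scal_right: "dot a (scal c b) = c * dot a b" by (simp add: pt_simps algebra_simps)
lemma dot_addp_left: "dot (addp a a') b = dot a b + dot a' b" by (simp add: pt_simps algebra_simps)
lemma dot_addp_right: "dot a (addp b b') = dot a b + dot a b'" by (simp add: pt_simps algebra_simps)
lemma det_scal_left: "det (scal s a) b c = s * det a b c" by (simp add: pt_simps algebra_simps)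
lemma det_scal_right: "det a b (scal s c) = s * det a b c" by (simp add: pt_simps algebra_simps)
lemma det_addp_right: "det a b (addp c c') = det a b c + det a b c'" by (simp add: pt_simps algebra_simps)

lemma scal_scal: "scal c (scal d a) = scal (c * d) a" by (simp add: pt_simps mult.assoc)
lemma scal_addp: "scal c (addp a b) = addp (scal c a) (scal c b)" by (simp add: pt_simps algebra_simps)
lemma scal_one: "scal 1 a = a" by (simp add: pt_simps)
lemma scal_zero: "scal s (0,0,0) = (0,0,0)" "scal 0 a = (0,0,0)" by (simp_all add: pt_simps)
lemma addp_zero: "addp a (0,0,0) = a" "addp (0,0,0) a = a" by (simp_all add: pt_simps)
lemma scal_eq_zero_iff: "scal c (a::'a::idom pt) = (0,0,0) \<longleftrightarrow> c = 0 \<or> a = (0,0,0)"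
  by (auto simp: pt_simps)

lemma cross_cross: "cross (cross a b) u = addp (scal (dot a u) b) (scal (- dot b u) a)"
  by (simp add: pt_simps algebra_simps)

lemma cross_lin_comb:
  "cross (addp (scal s P) (scal t R)) (addp (scal u P) (scal v R)) = scal (s * v - t * u) (cross P R)"
  by (simp add: pt_simps algebra_simps)

lemma cramer:
  "scal (det a b w) u = addp (addp (scal (det u b w) a) (scal (det a u w) b)) (scal (det a b u) w)"
  by (simp add: pt_simps algebra_simps)

lemma dual_cramer:
  "scal (det a b m) u =
     addp (addp (scal (dot a u) (cross b m)) (scal (dot b u) (cross m a))) (scal (dot m u) (cross a b))"
  by (simp add: pt_simps algebra_simps)

lemma det_cross_cross: "det (cross b m) (cross m a) (cross a b) = (det a b m)\<^sup>2"
  by (simp add: pt_simps power2_eq_square algebra_simps)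

lemma parallel_scal:
  fixes a b :: "'a::field pt"
  assumes "b \<noteq> (0,0,0)" "cross a b = (0,0,0)"
  shows "\<exists>s. a = scal s b"
proof -
  from assms(2) have e: "py a * pz b = pz a * py b" "pz a * px b = px a * pz b" "px a * py b = py a * px b"
    by (auto simp: pt_simps)
  consider "px b \<noteq> 0" | "py b \<noteq> 0" | "pz b \<noteq> 0" using assms(1) by (auto simp: pt_eq_iff)
  then show ?thesis
  proof cases
    case 1 then show ?thesis using e by (intro exI[of _ "px a / px b"]) (auto simp: pt_simps field_simps)
  next
    case 2 then show ?thesis using e by (intro exI[of _ "py a / py b"]) (auto simp: pt_simps field_simps)
  next
    case 3 then show ?thesis using e by (intro exI[of _ "pz a / pz b"]) (auto simp: pt_simps field_simps)
  qed
qed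

lemma indep_iff_cross_nonzero:
  fixes P R :: "'a::field pt"
  shows "indep P R \<longleftrightarrow> cross P R \<noteq> (0,0,0)"
proof
  assume ind: "indep P R"
  show "cross P R \<noteq> (0,0,0)"
  proof
    assume c: "cross P R = (0,0,0)"
    obtain a b where "(a, b) \<noteq> (0, 0)" "addp (scal a P) (scal b R) = (0,0,0)"
    proof (cases "R = (0,0,0)")
      case True
      then show ?thesis using that[of 0 1] by (simp add: pt_simps)
    next
      case False
      then obtain s where "P = scal s R" using parallel_scal c by blast
      then show ?thesis using that[of 1 "-s"] by (simp add: pt_simps)
    qed
    then show False using ind unfolding indep_def by auto
  qed
next
  assume c: "cross P R \<noteq> (0,0,0)"
  show "indep P R" unfolding indep_def
  proof (intro allI impI)
    fix a b assume h: "addp (scal a P) (scal b R) = (0,0,0)"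
    have "scal a (cross P R) = cross (addp (scal a P) (scal b R)) R"
         "scal b (cross P R) = cross P (addp (scal a P) (scal b R))"
      by (simp_all add: pt_simps algebra_simps)
    then have "scal a (cross P R) = (0,0,0)" "scal b (cross P R) = (0,0,0)"
      unfolding h by (simp_all add: pt_simps)
    then show "a = 0 \<and> b = 0" using c by (simp add: scal_eq_zero_iff)
  qed
qed

lemma cross_parallel_normal:
  fixes L a b :: "'a::field pt"
  assumes "L \<noteq> (0,0,0)" "dot L a = 0" "dot L b = 0"
  shows "\<exists>s. cross a b = scal s L"
proof -
  have "cross (cross a b) L = (0,0,0)"
    using assms(2,3) by (simp add: cross_cross dot_commute) (simp add: pt_simps)
  then show ?thesis using parallel_scal[OF assms(1)] by blast
qed

lemma normal_parallel_cross:
  fixes u a b :: "'a::field pt"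
  assumes "dot u a = 0" "dot u b = 0" "cross a b \<noteq> (0,0,0)"
  shows "\<exists>m. u = scal m (cross a b)"
proof -
  have "cross u (cross a b) = scal (-1) (cross (cross a b) u)" by (rule cross_swap)
  also have "\<dots> = (0,0,0)"
    using assms(1,2) by (simp add: cross_cross dot_commute) (simp add: pt_simps)
  finally have "cross u (cross a b) = (0,0,0)" .
  then show ?thesis using parallel_scal[OF assms(3)] by blast
qed

lemma det_on_line:
  fixes L a b u :: "'a::field pt"
  assumes "L \<noteq> (0,0,0)" "dot L a = 0" "dot L b = 0" "dot L u = 0"
  shows "det a b u = 0"
proof -
  obtain s where s: "cross a b = scal s L" using cross_parallel_normal assms by blast
  have "det a b u = dot u (cross a b)" by (simp add: pt_simps algebra_simps)
  also have "\<dots> = s * dot L u" by (simp add: s dot_scal_right dot_commute)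
  finally show ?thesis using assms(4) by simp
qed

lemma exists_det_nonzero:
  fixes a b :: "'a::field pt"
  assumes "cross a b \<noteq> (0,0,0)"
  shows "\<exists>w. det a b w \<noteq> 0"
proof (rule ccontr)
  assume "\<not> ?thesis"
  then have "det a b (1,0,0) = 0" "det a b (0,1,0) = 0" "det a b (0,0,1) = 0" by auto
  then have "cross a b = (0,0,0)" by (simp add: pt_simps algebra_simps)
  then show False using assms by simp
qed

lemma scal_cancel:
  fixes u v :: "'a::field pt"
  assumes "c \<noteq> 0" "scal c u = v"
  shows "u = scal (inverse c) v"
  using assms by (auto simp: scal_scal scal_one)

lemma span2_if_det_zero:
  fixes a b u :: "'a::field pt"
  assumes "cross a b \<noteq> (0,0,0)" "det a b u = 0"
  shows "\<exists>s t. u = addp (scal s a) (scal t b)"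
proof -
  obtain w where w: "det a b w \<noteq> 0" using exists_det_nonzero assms by blast
  have "scal (det a b w) u = addp (scal (det u b w) a) (scal (det a u w) b)"
    using cramer[of a b w u] assms(2) by (simp add: scal_zero addp_zero)
  from scal_cancel[OF w this] show ?thesis unfolding scal_addp scal_scal by blast
qed

lemma span3:
  fixes a b c u :: "'a::field pt"
  assumes "det a b c \<noteq> 0"
  shows "\<exists>r s t. u = addp (addp (scal r a) (scal s b)) (scal t c)"
  using scal_cancel[OF assms cramer[of a b c u]] unfolding scal_addp scal_scal by blast

lemma eq_if_dot_frame_eq:
  fixes a b m u v :: "'a::field pt"
  assumes "det a b m \<noteq> 0" "dot a u = dot a v" "dot b u = dot b v" "dot m u = dot m v"
  shows "u = v"
proof -
  have "scal (det a b m) u = scal (det a b m) v"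
    using dual_cramer[of a b m u] dual_cramer[of a b m v] assms by simp
  then show ?thesis using assms(1) by (auto simp: pt_simps)
qed

lemma det_zero_if_parallel:
  fixes a b v :: "'a::field pt"
  assumes "cross v a = (0,0,0) \<or> cross v b = (0,0,0)" and "a \<noteq> (0,0,0)" "b \<noteq> (0,0,0)"
  shows "det a b v = 0"
proof -
  obtain s where "v = scal s a \<or> v = scal s b"
    using assms parallel_scal[of a v] parallel_scal[of b v] by blast
  then show ?thesis by (elim disjE) (simp_all add: det_scal_right det_self13 det_self23)
qed

lemma line_basis:
  fixes L :: "'a::field pt"
  assumes "L \<noteq> (0,0,0)"
  obtains P R where "dot L P = 0" "dot L R = 0" "cross P R \<noteq> (0,0,0)"
proof -
  consider "px L \<noteq> 0" | "py L \<noteq> 0" | "pz L \<noteq> 0" using assms by (auto simp: pt_eq_iff)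
  then show ?thesis
  proof cases
    case 1 then show ?thesis
      by (intro that[of "(- py L, px L, 0)" "(- pz L, 0, px L)"]) (auto simp: pt_simps algebra_simps)
  next
    case 2 then show ?thesis
      by (intro that[of "(py L, - px L, 0)" "(0, - pz L, py L)"]) (auto simp: pt_simps algebra_simps)
  next
    case 3 then show ?thesis
      by (intro that[of "(pz L, 0, - px L)" "(0, pz L, - py L)"]) (auto simp: pt_simps algebra_simps)
  qed
qed

lemma line_set_eq_iff:
  fixes L L' :: "'a::field pt"
  assumes L: "L \<noteq> (0,0,0)" and L': "L' \<noteq> (0,0,0)"
  shows "line_set L = line_set L' \<longleftrightarrow> cross L L' = (0,0,0)"
proof
  assume eq: "line_set L = line_set L'"
  obtain P R where PR: "dot L P = 0" "dot L R = 0" "cross P R \<noteq> (0,0,0)" using line_basis[OF L] .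
  then have "dot L' P = 0" "dot L' R = 0" using eq unfolding line_set_def on_line_iff_dot by auto
  then obtain s' where s': "cross P R = scal s' L'" using cross_parallel_normal[OF L'] by blast
  obtain s where s: "cross P R = scal s L" using cross_parallel_normal[OF L PR(1,2)] by blast
  have "s \<noteq> 0" "s' \<noteq> 0" using PR(3) s s' by (auto simp: scal_zero)
  then have "L = scal (s' / s) L'" using s s' by (simp add: pt_simps field_simps)
  then show "cross L L' = (0,0,0)" by (simp add: cross_scal_left cross_self scal_zero)
next
  assume "cross L L' = (0,0,0)"
  then obtain s where s: "L = scal s L'" using parallel_scal[OF L'] by blast
  then have "s \<noteq> 0" using L by (auto simp: scal_zero)
  then show "line_set L = line_set L'" unfolding line_set_def on_line_iff_dot s dot_scal_left by auto
qed

section \<open>Characteristic 2\<close>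

lemma char2_uminus: "(2::'a::comm_ring_1) = 0 \<Longrightarrow> - x = (x::'a)"
  by (metis add_eq_0_iff mult_2 mult_zero_left)

lemma char2_diff: "(2::'a::comm_ring_1) = 0 \<Longrightarrow> x - y = x + (y::'a)"
  by (metis char2_uminus diff_conv_add_uminus)

lemma char2_add_self: "(2::'a::comm_ring_1) = 0 \<Longrightarrow> x + x = (0::'a)"
  by (metis char2_uminus add.right_inverse)

lemma char2_of_nat: "(2::'a::comm_ring_1) = 0 \<Longrightarrow> (of_nat n :: 'a) = (if even n then 0 else 1)"
  by (induction n) (auto simp: char2_add_self)

lemma char2_power2_add: "(2::'a::comm_ring_1) = 0 \<Longrightarrow> (x + y)\<^sup>2 = x\<^sup>2 + (y::'a)\<^sup>2"
  by (simp add: power2_sum)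

lemma char2_power2_inj: "(2::'a::idom) = 0 \<Longrightarrow> x\<^sup>2 = y\<^sup>2 \<Longrightarrow> x = (y::'a)"
  by (metis char2_power2_add char2_uminus add_eq_0_iff power_zero_numeral zero_eq_power2)

lemma addp_self: "(2::'a::comm_ring_1) = 0 \<Longrightarrow> addp u u = ((0,0,0)::'a pt)"
  by (simp add: pt_simps char2_add_self)

lemma sq_addp: "(2::'a::comm_ring_1) = 0 \<Longrightarrow> sq (addp a b) = addp (sq a) (sq (b::'a pt))"
  by (simp add: pt_simps char2_power2_add)

lemma sq_scal: "sq (scal c a) = scal (c\<^sup>2) (sq a)"
  by (simp add: pt_simps power_mult_distrib)

lemma dot_sq: "(2::'a::comm_ring_1) = 0 \<Longrightarrow> dot (sq a) (sq b) = (dot a (b::'a pt))\<^sup>2"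
  by (simp add: pt_simps char2_power2_add power_mult_distrib)

lemma det_sq: "(2::'a::comm_ring_1) = 0 \<Longrightarrow> det (sq a) (sq b) (sq c) = (det a b (c::'a pt))\<^sup>2"
  by (simp add: pt_simps char2_power2_add power_mult_distrib char2_diff algebra_simps)

lemma cross_sq: "(2::'a::comm_ring_1) = 0 \<Longrightarrow> cross (sq a) (sq b) = sq (cross a (b::'a pt))"
  by (simp add: pt_simps char2_diff power_mult_distrib char2_power2_add)

lemma sq_nonzero: "(a::'a::idom pt) \<noteq> (0,0,0) \<Longrightarrow> sq a \<noteq> (0,0,0)"
  by (auto simp: pt_simps)

lemma sq_inj: "(2::'a::idom) = 0 \<Longrightarrow> sq u = sq v \<Longrightarrow> u = (v::'a pt)"
  by (simp add: pt_simps) (meson char2_power2_inj)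

section \<open>Quartics in characteristic 2\<close>

lemma mons3_eq:
  "mons 3 = {(3,0,0),(0,3,0),(0,0,3),(2,1,0),(2,0,1),(1,2,0),(0,2,1),(1,0,2),(0,1,2),(1,1,1)}"
  (is "_ = ?R")
proof (rule subset_antisym)
  have A: "(a, b, c) \<in> ?R" if h: "a + b + c = 3" for a b c :: nat
  proof -
    have c: "c = 3 - a - b" using h by auto
    have "a \<le> 3" "b \<le> 3" using h by auto
    then have "a = 0 \<or> a = 1 \<or> a = 2 \<or> a = 3" "b = 0 \<or> b = 1 \<or> b = 2 \<or> b = 3" by linarith+
    then show ?thesis using h unfolding c by (elim disjE; simp)
  qed
  show "mons 3 \<subseteq> ?R"
  proof
    fix x assume "x \<in> mons 3"
    then obtain a b c where "x = (a, b, c)" "a + b + c = 3" unfolding mons_def by auto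
    then show "x \<in> ?R" using A by simp
  qed
  show "?R \<subseteq> mons 3" unfolding mons_def by (simp only: insert_subset mem_Collect_eq prod.case) simp
qed

lemma mons4_eq: "mons 4 = {(4,0,0),(0,4,0),(0,0,4),(3,1,0),(3,0,1),(1,3,0),(0,3,1),(1,0,3),(0,1,3),
  (2,2,0),(2,0,2),(0,2,2),(2,1,1),(1,2,1),(1,1,2)}" (is "_ = ?R")
proof (rule subset_antisym)
  have A: "(a, b, c) \<in> ?R" if h: "a + b + c = 4" for a b c :: nat
  proof -
    have c: "c = 4 - a - b" using h by auto
    have "a \<le> 4" "b \<le> 4" using h by auto
    then have "a = 0 \<or> a = 1 \<or> a = 2 \<or> a = 3 \<or> a = 4" "b = 0 \<or> b = 1 \<or> b = 2 \<or> b = 3 \<or> b = 4"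
      by linarith+
    then show ?thesis using h unfolding c by (elim disjE; simp)
  qed
  show "mons 4 \<subseteq> ?R"
  proof
    fix x assume "x \<in> mons 4"
    then obtain a b c where "x = (a, b, c)" "a + b + c = 4" unfolding mons_def by auto
    then show "x \<in> ?R" using A by simp
  qed
  show "?R \<subseteq> mons 4" unfolding mons_def by (simp only: insert_subset mem_Collect_eq prod.case) simp
qed

lemma evf_4: "evf F 4 (x,y,z) = F(4,0,0)*x^4 + F(0,4,0)*y^4 + F(0,0,4)*z^4 + F(3,1,0)*x^3*y
  + F(3,0,1)*x^3*z + F(1,3,0)*x*y^3 + F(0,3,1)*y^3*z + F(1,0,3)*x*z^3 + F(0,1,3)*y*z^3
  + F(2,2,0)*x^2*y^2 + F(2,0,2)*x^2*z^2 + F(0,2,2)*y^2*z^2 + F(2,1,1)*x^2*y*z + F(1,2,1)*x*y^2*z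
  + F(1,1,2)*x*y*z^2"
  by (simp add: mons4_eq algebra_simps)

lemma evf_3: "evf G 3 (x,y,z) = G(3,0,0)*x^3 + G(0,3,0)*y^3 + G(0,0,3)*z^3 + G(2,1,0)*x^2*y
  + G(2,0,1)*x^2*z + G(1,2,0)*x*y^2 + G(0,2,1)*y^2*z + G(1,0,2)*x*z^2 + G(0,1,2)*y*z^2 + G(1,1,1)*x*y*z"
  by (simp add: mons3_eq algebra_simps)

lemma evf_4_scal: "evf F 4 (scal c X) = c^4 * evf F 4 X"
proof -
  obtain x y z where "X = (x, y, z)" by (cases X rule: prod_cases3)
  then show ?thesis
    by (simp only: scal.simps evf_4)
       (simp add: algebra_simps power_mult_distrib power2_eq_square power3_eq_cube power4_eq_xxxx)
qed


text \<open>With N the matrix with rows wrow1 F, wrow2 F, wrow3 F, we have wmap F X = N X^[2] and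
  wadj F l = N^T l.\<close>

definition wrow1 :: "(nat \<times> nat \<times> nat \<Rightarrow> 'a) \<Rightarrow> 'a pt" where
  "wrow1 F = (F(2,1,1), F(0,3,1), F(0,1,3))"
definition wrow2 :: "(nat \<times> nat \<times> nat \<Rightarrow> 'a) \<Rightarrow> 'a pt" where
  "wrow2 F = (F(3,0,1), F(1,2,1), F(1,0,3))"
definition wrow3 :: "(nat \<times> nat \<times> nat \<Rightarrow> 'a) \<Rightarrow> 'a pt" where
  "wrow3 F = (F(3,1,0), F(1,3,0), F(1,1,2))"

definition wmap :: "(nat \<times> nat \<times> nat \<Rightarrow> 'a::comm_ring_1) \<Rightarrow> 'a pt \<Rightarrow> 'a pt" where
  "wmap F X = (dot (wrow1 F) (sq X), dot (wrow2 F) (sq X), dot (wrow3 F) (sq X))"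

definition wadj :: "(nat \<times> nat \<times> nat \<Rightarrow> 'a::comm_ring_1) \<Rightarrow> 'a pt \<Rightarrow> 'a pt" where
  "wadj F l = addp (addp (scal (px l) (wrow1 F)) (scal (py l) (wrow2 F))) (scal (pz l) (wrow3 F))"

definition qpart :: "(nat \<times> nat \<times> nat \<Rightarrow> 'a::comm_ring_1) \<Rightarrow> 'a pt \<Rightarrow> 'a" where
  "qpart F u = F(4,0,0) * px u^2 + F(0,4,0) * py u^2 + F(0,0,4) * pz u^2
     + F(2,2,0) * px u * py u + F(2,0,2) * px u * pz u + F(0,2,2) * py u * pz u"

lemmas form_simps = wrow1_def wrow2_def wrow3_def wmap_def wadj_def qpart_def

lemma evf_4_decomp: "evf F 4 X = qpart F (sq X) + dot (pair_prods X) (wmap F X)"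
proof -
  obtain x y z where "X = (x, y, z)" by (cases X rule: prod_cases3)
  then show ?thesis
    by (simp only: evf_4)
       (simp add: form_simps pt_simps algebra_simps power2_eq_square power3_eq_cube power4_eq_xxxx)
qed

lemma dot_wmap: "dot l (wmap F X) = dot (wadj F l) (sq X)"
  by (simp add: form_simps pt_simps algebra_simps)

lemma wmap_addp: "(2::'a::comm_ring_1) = 0 \<Longrightarrow> wmap F (addp X Y) = addp (wmap F X) (wmap (F::_ \<Rightarrow> 'a) Y)"
  by (simp add: form_simps pt_simps char2_power2_add algebra_simps)

lemma wmap_scal: "wmap F (scal c X) = scal (c^2) (wmap F X)"
  by (simp add: form_simps pt_simps power_mult_distrib algebra_simps)

lemma wadj_addp: "wadj F (addp l l') = addp (wadj F l) (wadj F l')"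
  by (simp add: form_simps pt_simps algebra_simps)

lemma wadj_scal: "wadj F (scal c l) = scal c (wadj F l)"
  by (simp add: form_simps pt_simps algebra_simps)

lemma wmap_comb3:
  "(2::'a::comm_ring_1) = 0 \<Longrightarrow> wmap F (addp (addp (scal x u) (scal y v)) (scal z (w::'a pt))) =
     addp (addp (scal (x^2) (wmap F u)) (scal (y^2) (wmap F v))) (scal (z^2) (wmap F w))"
  by (simp only: wmap_addp wmap_scal)

lemma wmap_std_basis:
  assumes "(2::'a::comm_ring_1) = 0"
  shows "wmap F X = addp (addp (scal (px X^2) (wmap F (1,0,0)))
     (scal (py X^2) (wmap F (0,1,0)))) (scal (pz X^2) (wmap F ((0,0,1)::'a pt)))"
proof -
  have "X = addp (addp (scal (px X) (1,0,0)) (scal (py X) (0,1,0))) (scal (pz X) (0,0,1))"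
    by (simp add: pt_simps)
  then show ?thesis using wmap_comb3[OF assms] by metis
qed

lemma gradient_char2:
  assumes c2: "(2::'a::comm_ring_1) = 0"
  shows "evf (dX F) 3 X = px (cross X (wmap (F::_ \<Rightarrow> 'a) X))"
    and "evf (dY F) 3 X = py (cross X (wmap F X))"
    and "evf (dZ F) 3 X = pz (cross X (wmap F X))"
proof -
  have three: "(3::'a) = 1" and four: "(4::'a) = 0"
    using char2_of_nat[OF c2, of 3] char2_of_nat[OF c2, of 4] by simp_all
  obtain x y z where X: "X = (x, y, z)" by (cases X rule: prod_cases3)
  show "evf (dX F) 3 X = px (cross X (wmap F X))" "evf (dY F) 3 X = py (cross X (wmap F X))"
       "evf (dZ F) 3 X = pz (cross X (wmap F X))"
    unfolding X evf_3
    by (simp_all add: c2 three four char2_of_nat[OF c2] char2_diff[OF c2] form_simps pt_simps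
        algebra_simps power2_eq_square power3_eq_cube)
qed

lemma nonsingular_off_curve:
  fixes F :: "_ \<Rightarrow> 'a::field"
  assumes c2: "(2::'a) = 0" and ns: "nonsingular_quartic F"
    and X: "X \<noteq> (0,0,0)" "cross X (wmap F X) = (0,0,0)"
  shows "evf F 4 X \<noteq> 0"
proof -
  have "evf (dX F) 3 X = 0" "evf (dY F) 3 X = 0" "evf (dZ F) 3 X = 0"
    using X(2) by (simp_all add: gradient_char2[OF c2])
  then show ?thesis using ns X(1) unfolding nonsingular_quartic_def by blast
qed

definition line_coeff2 :: "(nat \<times> nat \<times> nat \<Rightarrow> 'a::comm_ring_1) \<Rightarrow> 'a pt \<Rightarrow> 'a pt \<Rightarrow> 'a" where
  "line_coeff2 F P R = qpart F (addp (sq P) (sq R)) - qpart F (sq P) - qpart F (sq R)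
     + dot (pair_prods P) (wmap F R) + dot (pair_prods R) (wmap F P)"

definition line_poly :: "(nat \<times> nat \<times> nat \<Rightarrow> 'a::comm_ring_1) \<Rightarrow> 'a pt \<Rightarrow> 'a pt \<Rightarrow> 'a poly" where
  "line_poly F P R = [:evf F 4 P, dot (cross P R) (wmap F P), line_coeff2 F P R,
     dot (cross P R) (wmap F R), evf F 4 R:]"

lemma coeff_line_poly:
  "coeff (line_poly F P R) 0 = evf F 4 P"
  "coeff (line_poly F P R) 1 = dot (cross P R) (wmap F P)"
  "coeff (line_poly F P R) 2 = line_coeff2 F P R"
  "coeff (line_poly F P R) 3 = dot (cross P R) (wmap F R)"
  "coeff (line_poly F P R) 4 = evf F 4 R"
  by (simp_all add: line_poly_def numeral_eq_Suc)

lemma poly_line_poly: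
  assumes c2: "(2::'a::comm_ring_1) = 0"
  shows "poly (line_poly F P R) t = evf F 4 (addp P (scal t (R::'a pt)))"
proof -
  have qpart: "qpart F (addp u (scal s v)) =
      qpart F u + s * (qpart F (addp u v) - qpart F u - qpart F v) + s^2 * qpart F v" for u v s
    by (simp add: form_simps pt_simps algebra_simps power2_eq_square)
  have sq: "sq (addp P (scal t R)) = addp (sq P) (scal (t^2) (sq R))"
    by (simp add: sq_addp[OF c2] sq_scal)
  have wmap: "wmap F (addp P (scal t R)) = addp (wmap F P) (scal (t^2) (wmap F R))"
    by (simp add: wmap_addp[OF c2] wmap_scal)
  have pair_prods: "pair_prods (addp P (scal t R)) =
      addp (addp (pair_prods P) (scal t (cross P R))) (scal (t^2) (pair_prods R))"
    by (simp add: pt_simps char2_diff[OF c2] algebra_simps power2_eq_square)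
  show ?thesis
    unfolding evf_4_decomp[of F "addp P (scal t R)"] evf_4_decomp[of F P] evf_4_decomp[of F R]
      sq wmap pair_prods qpart line_poly_def line_coeff2_def
    by (simp add: dot_addp_left dot_addp_right dot_scal_left dot_scal_right algebra_simps
        power2_eq_square power3_eq_cube power4_eq_xxxx)
qed

lemma alg_closed_infinite:
  assumes "alg_closed TYPE('a::field)"
  shows "infinite (UNIV :: 'a set)"
proof
  assume fin: "finite (UNIV :: 'a set)"
  define q :: "'a poly" where "q = (\<Prod>a\<in>UNIV. [:-a, 1:])"
  have "degree q = card (UNIV :: 'a set)"
    unfolding q_def by (subst degree_prod_eq_sum_degree) auto
  then have "degree (q + 1) > 0" using fin by (subst degree_add_eq_left) (auto simp: card_gt_0_iff)
  then obtain x where "poly (q + 1) x = 0" using assms unfolding alg_closed_def by blast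
  moreover have "poly q x = 0" unfolding q_def poly_prod by (rule prod_zero) (use fin in auto)
  ultimately show False by simp
qed

lemma restr_eq_line_poly:
  assumes inf: "infinite (UNIV :: 'a::field set)" and c2: "(2::'a) = 0"
  shows "restr F P R = line_poly F P (R::'a pt)"
proof -
  have poly_restr: "poly (restr F P R) t = evf F 4 (addp P (scal t R))" for t
    by (cases P rule: prod_cases3; cases R rule: prod_cases3) (simp add: poly_sum case_prod_beta algebra_simps)
  have "poly (restr F P R - line_poly F P R) t = 0" for t
    by (simp add: poly_restr poly_line_poly[OF c2])
  then have "{t. poly (restr F P R - line_poly F P R) t = 0} = UNIV" by auto
  then have "restr F P R - line_poly F P R = 0" using poly_roots_finite inf by metis
  then show ?thesis by simp
qed

lemma le_order_0_iff:
  fixes p :: "'a::idom poly"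
  assumes "p \<noteq> 0"
  shows "n \<le> order 0 p \<longleftrightarrow> (\<forall>i<n. coeff p i = 0)"
  using monom_1_dvd_iff[OF assms] monom_1_dvd_iff' by blast

lemma vanishes_on_line_if_line_poly_eq_0:
  fixes F :: "_ \<Rightarrow> 'a::field"
  assumes c2: "(2::'a) = 0" and L: "L \<noteq> (0,0,0)" "dot L P = 0" "dot L R = 0"
    and PR: "cross P R \<noteq> (0,0,0)" and zero: "line_poly F P R = 0" and Z: "dot L Z = 0"
  shows "evf F 4 Z = 0"
proof -
  obtain s t where Z_eq: "Z = addp (scal s P) (scal t R)"
    using span2_if_det_zero[OF PR det_on_line[OF L Z]] by blast
  show ?thesis
  proof (cases "s = 0")
    case True
    then have "Z = scal t R" using Z_eq by (simp add: pt_simps)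
    then show ?thesis using coeff_line_poly(5)[of F P R] zero by (simp add: evf_4_scal)
  next
    case False
    then have "Z = scal s (addp P (scal (t/s) R))" using Z_eq by (simp add: pt_simps field_simps)
    then show ?thesis using poly_line_poly[OF c2, of F P R "t/s"] zero by (simp add: evf_4_scal)
  qed
qed

section \<open>Bitangents as eigenlines\<close>

definition eigenline :: "(nat \<times> nat \<times> nat \<Rightarrow> 'a::field) \<Rightarrow> 'a pt \<Rightarrow> bool" where
  "eigenline F L \<longleftrightarrow> L \<noteq> (0,0,0) \<and> (\<exists>\<mu>. wadj F L = scal \<mu> (sq L))"

lemma eigenline_dot_wmap:
  fixes F :: "_ \<Rightarrow> 'a::field"
  assumes c2: "(2::'a) = 0" and "eigenline F L" and "dot L U = 0"
  shows "dot L (wmap F U) = 0"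
proof -
  obtain \<mu> where "wadj F L = scal \<mu> (sq L)" using assms(2) unfolding eigenline_def by blast
  then show ?thesis using assms(3) by (simp add: dot_wmap dot_scal_left dot_sq[OF c2])
qed

lemma eigenline_odd_coeffs:
  fixes F :: "_ \<Rightarrow> 'a::field"
  assumes c2: "(2::'a) = 0" and e: "eigenline F L" and "dot L U = 0" "dot L V = 0"
  shows "dot (cross U V) (wmap F U) = 0" "dot (cross U V) (wmap F V) = 0"
proof -
  obtain s where "cross U V = scal s L"
    using cross_parallel_normal assms(3,4) e unfolding eigenline_def by blast
  then show "dot (cross U V) (wmap F U) = 0" "dot (cross U V) (wmap F V) = 0"
    using eigenline_dot_wmap[OF c2 e] assms(3,4) by (simp_all add: dot_scal_left)
qed

lemma eigenline_if_odd_coeffs: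
  fixes F :: "_ \<Rightarrow> 'a::field"
  assumes c2: "(2::'a) = 0" and L: "L \<noteq> (0,0,0)" "dot L P = 0" "dot L R = 0"
    and PR: "cross P R \<noteq> (0,0,0)"
    and odd: "dot (cross P R) (wmap F P) = 0" "dot (cross P R) (wmap F R) = 0"
  shows "eigenline F L"
proof -
  obtain s where s: "cross P R = scal s L" using cross_parallel_normal[OF L] by blast
  have "s \<noteq> 0" using PR s by (auto simp: scal_zero)
  then have "dot (wadj F L) (sq P) = 0" "dot (wadj F L) (sq R) = 0"
    using odd unfolding s dot_scal_left dot_wmap[symmetric] by auto
  moreover have "cross (sq P) (sq R) \<noteq> (0,0,0)"
    using PR by (simp add: cross_sq[OF c2] sq_nonzero)
  ultimately obtain m where "wadj F L = scal m (cross (sq P) (sq R))"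
    using normal_parallel_cross by blast
  also have "\<dots> = scal (m * s^2) (sq L)"
    unfolding cross_sq[OF c2] s sq_scal scal_scal ..
  finally show ?thesis using L unfolding eigenline_def by blast
qed

lemma imult_eq_order_line_poly:
  assumes "infinite (UNIV :: 'a::field set)" and "(2::'a) = 0"
  shows "imult F P R = order 0 (line_poly F P (R::'a pt))"
  unfolding imult_def restr_eq_line_poly[OF assms] ..

lemma eigenline_imult_ge:
  fixes F :: "_ \<Rightarrow> 'a::field"
  assumes inf: "infinite (UNIV :: 'a set)" and c2: "(2::'a) = 0" and e: "eigenline F L"
    and UV: "dot L U = 0" "dot L V = 0" "cross U V \<noteq> (0,0,0)"
    and U: "evf F 4 U = 0" and nc: "\<exists>Z. dot L Z = 0 \<and> evf F 4 Z \<noteq> 0"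
  shows "2 \<le> imult F U V" and "line_coeff2 F U V = 0 \<Longrightarrow> 4 \<le> imult F U V"
proof -
  have L: "L \<noteq> (0,0,0)" using e unfolding eigenline_def by blast
  have nz: "line_poly F U V \<noteq> 0" using vanishes_on_line_if_line_poly_eq_0[OF c2 L UV] nc by blast
  have c: "coeff (line_poly F U V) 0 = 0" "coeff (line_poly F U V) 1 = 0"
    "coeff (line_poly F U V) 3 = 0"
    unfolding coeff_line_poly using eigenline_odd_coeffs[OF c2 e UV(1,2)] U by simp_all
  then have "\<forall>i<2. coeff (line_poly F U V) i = 0" by (auto simp: less_Suc_eq numeral_eq_Suc)
  then show "2 \<le> imult F U V"
    unfolding imult_eq_order_line_poly[OF inf c2] le_order_0_iff[OF nz] .
  assume "line_coeff2 F U V = 0"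
  then have "coeff (line_poly F U V) 2 = 0" by (simp add: coeff_line_poly)
  then have "\<forall>i<4. coeff (line_poly F U V) i = 0"
    using c by (auto simp: less_Suc_eq numeral_eq_Suc)
  then show "4 \<le> imult F U V"
    unfolding imult_eq_order_line_poly[OF inf c2] le_order_0_iff[OF nz] .
qed

lemma alg_closed_sqrt:
  assumes "alg_closed TYPE('a::field)"
  shows "\<exists>b::'a. b^2 = a"
proof -
  have "degree [:-a, 0, 1:] > 0" by simp
  then obtain b where "poly [:-a, 0, 1:] b = 0" using assms unfolding alg_closed_def by blast
  then show ?thesis by (auto simp: power2_eq_square algebra_simps)
qed

lemma eigenline_two_zeros_bitangent:
  fixes F :: "_ \<Rightarrow> 'a::field"
  assumes inf: "infinite (UNIV :: 'a set)" and c2: "(2::'a) = 0" and e: "eigenline F L"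
    and UV: "dot L U = 0" "dot L V = 0" "cross U V \<noteq> (0,0,0)"
    and zeros: "evf F 4 U = 0" "evf F 4 V = 0" and nc: "\<exists>Z. dot L Z = 0 \<and> evf F 4 Z \<noteq> 0"
  shows "is_bitangent F L"
proof -
  have "2 \<le> imult F U V" using eigenline_imult_ge(1)[OF inf c2 e UV zeros(1) nc] .
  moreover have "2 \<le> imult F V U"
    using eigenline_imult_ge(1)[OF inf c2 e UV(2,1) cross_swap_nonzero[OF UV(3)] zeros(2) nc] .
  ultimately show ?thesis
    using e UV nc unfolding is_bitangent_def eigenline_def on_line_iff_dot indep_iff_cross_nonzero
    by blast
qed

lemma line_zero_basis:
  fixes F :: "_ \<Rightarrow> 'a::field"
  assumes cl: "alg_closed TYPE('a)" and c2: "(2::'a) = 0" and L: "L \<noteq> (0,0,0)"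
  obtains U V where "dot L U = 0" "dot L V = 0" "cross U V \<noteq> (0,0,0)" "evf F 4 U = 0"
proof -
  obtain P R where PR: "dot L P = 0" "dot L R = 0" "cross P R \<noteq> (0,0,0)" using line_basis[OF L] .
  show ?thesis
  proof (cases "evf F 4 R = 0")
    case True
    then show ?thesis using that[of R P] PR cross_swap_nonzero by blast
  next
    case False
    then have "degree (line_poly F P R) > 0"
      using le_degree[of "line_poly F P R" 4] by (simp add: coeff_line_poly)
    then obtain t where "poly (line_poly F P R) t = 0" using cl unfolding alg_closed_def by blast
    then have "evf F 4 (addp P (scal t R)) = 0" by (simp add: poly_line_poly[OF c2])
    moreover have "dot L (addp P (scal t R)) = 0" using PR by (simp add: dot_addp_right dot_scal_right)
    moreover have "cross (addp P (scal t R)) R = cross P R" by (simp add: pt_simps algebra_simps)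
    ultimately show ?thesis using that PR by metis
  qed
qed

lemma eigenline_bitangent:
  fixes F :: "_ \<Rightarrow> 'a::field"
  assumes cl: "alg_closed TYPE('a)" and c2: "(2::'a) = 0" and e: "eigenline F L"
    and nc: "\<exists>Z. dot L Z = 0 \<and> evf F 4 Z \<noteq> 0"
  shows "is_bitangent F L"
proof -
  note inf = alg_closed_infinite[OF cl]
  have L: "L \<noteq> (0,0,0)" using e unfolding eigenline_def by blast
  obtain U V where UV: "dot L U = 0" "dot L V = 0" "cross U V \<noteq> (0,0,0)" and U: "evf F 4 U = 0"
    using line_zero_basis[OF cl c2 L] .
  consider "evf F 4 V = 0" | "line_coeff2 F U V = 0" | "evf F 4 V \<noteq> 0" "line_coeff2 F U V \<noteq> 0"
    by blast
  then show ?thesis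
  proof cases
    case 1
    then show ?thesis using eigenline_two_zeros_bitangent[OF inf c2 e UV U _ nc] by blast
  next
    case 2
    then have "4 \<le> imult F U V" using eigenline_imult_ge(2)[OF inf c2 e UV U nc] by blast
    then show ?thesis
      using L UV nc unfolding is_bitangent_def on_line_iff_dot indep_iff_cross_nonzero by blast
  next
    case 3
    \<comment> \<open>F (U + t V) = line_coeff2 F U V t^2 + F V t^4, whose nonzero root gives a second zero V'\<close>
    obtain l where l: "l^2 = line_coeff2 F U V / evf F 4 V" using alg_closed_sqrt[OF cl] by blast
    then have l0: "l \<noteq> 0" using 3 by auto
    define V' where "V' = addp U (scal l V)"
    have "evf F 4 V' = line_coeff2 F U V * l^2 + evf F 4 V * (l^2)^2"
      unfolding V'_def poly_line_poly[OF c2, symmetric] poly_pCons line_poly_def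
        eigenline_odd_coeffs[OF c2 e UV(1,2)] U by (simp add: algebra_simps power2_eq_square power4_eq_xxxx)
    also have "\<dots> = 0" unfolding l using 3 by (simp add: power2_eq_square char2_add_self[OF c2])
    finally have V': "evf F 4 V' = 0" .
    have "dot L V' = 0" unfolding V'_def using UV by (simp add: dot_addp_right dot_scal_right)
    moreover have "cross U V' = scal l (cross U V)" unfolding V'_def by (simp add: pt_simps algebra_simps)
    then have "cross U V' \<noteq> (0,0,0)" using l0 UV(3) by (simp add: scal_eq_zero_iff)
    ultimately show ?thesis using eigenline_two_zeros_bitangent[OF inf c2 e UV(1) _ _ U V' nc] by blast
  qed
qed

lemma coeff_line_poly_zero_below_imult:
  assumes inf: "infinite (UNIV :: 'a::field set)" and c2: "(2::'a) = 0"
    and nz: "line_poly F P R \<noteq> 0" and "n \<le> imult F P R" and "i < n"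
  shows "coeff (line_poly F P (R::'a pt)) i = 0"
  using assms(4,5) unfolding imult_eq_order_line_poly[OF inf c2] le_order_0_iff[OF nz] by blast

lemma bitangent_eigenline:
  fixes F :: "_ \<Rightarrow> 'a::field"
  assumes inf: "infinite (UNIV :: 'a set)" and c2: "(2::'a) = 0" and b: "is_bitangent F L"
  shows "eigenline F L"
proof -
  have L: "L \<noteq> (0,0,0)" and nc: "\<exists>Z. dot L Z = 0 \<and> evf F 4 Z \<noteq> 0"
    using b unfolding is_bitangent_def on_line_iff_dot by auto
  have coeff0: "coeff (line_poly F P R) i = 0"
    if "dot L P = 0" "dot L R = 0" "cross P R \<noteq> (0,0,0)" "n \<le> imult F P R" "i < n" for P R n i
    using coeff_line_poly_zero_below_imult[OF inf c2 _ that(4,5)]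
      vanishes_on_line_if_line_poly_eq_0[OF c2 L that(1-3)] nc by blast
  from b consider
      (two) P R where "dot L P = 0" "dot L R = 0" "cross P R \<noteq> (0,0,0)"
        "2 \<le> imult F P R" "2 \<le> imult F R P"
    | (four) P R where "dot L P = 0" "dot L R = 0" "cross P R \<noteq> (0,0,0)" "4 \<le> imult F P R"
    unfolding is_bitangent_def on_line_iff_dot indep_iff_cross_nonzero by blast
  then show ?thesis
  proof cases
    case two
    have "dot (cross P R) (wmap F P) = 0"
      using coeff0[OF two(1-4), of 1] unfolding coeff_line_poly by simp
    moreover have "dot (cross R P) (wmap F R) = 0"
      using coeff0[OF two(2,1) cross_swap_nonzero[OF two(3)] two(5), of 1]
      unfolding coeff_line_poly by simp
    then have "dot (cross P R) (wmap F R) = 0" by (simp add: cross_swap[of R P] dot_scal_left)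
    ultimately show ?thesis using eigenline_if_odd_coeffs[OF c2 L two(1-3)] by blast
  next
    case four
    have "dot (cross P R) (wmap F P) = 0" "dot (cross P R) (wmap F R) = 0"
      using coeff0[OF four, of 1] coeff0[OF four, of 3] unfolding coeff_line_poly by simp_all
    then show ?thesis using eigenline_if_odd_coeffs[OF c2 L four(1-3)] by blast
  qed
qed

lemma eigenline_not_component:
  fixes F :: "_ \<Rightarrow> 'a::field"
  assumes cl: "alg_closed TYPE('a)" and c2: "(2::'a) = 0" and ns: "nonsingular_quartic F"
    and e: "eigenline F L"
  shows "\<exists>Z. dot L Z = 0 \<and> evf F 4 Z \<noteq> 0"
proof -
  have L: "L \<noteq> (0,0,0)" using e unfolding eigenline_def by blast
  obtain P R where PR: "dot L P = 0" "dot L R = 0" "cross P R \<noteq> (0,0,0)" using line_basis[OF L] .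
  \<comment> \<open>wmap F maps the line into itself; a direction A it fixes has vanishing gradient
    cross A (wmap F A), so F A \<noteq> 0 by non-singularity\<close>
  have "det P R (wmap F P) = 0" "det P R (wmap F R) = 0"
    using det_on_line[OF L PR(1,2)] eigenline_dot_wmap[OF c2 e] PR(1,2) by blast+
  then obtain \<alpha> \<beta> \<gamma> \<delta> where WP: "wmap F P = addp (scal \<alpha> P) (scal \<beta> R)"
      and WR: "wmap F R = addp (scal \<gamma> P) (scal \<delta> R)"
    using span2_if_det_zero[OF PR(3)] by blast
  obtain s t where st: "s \<noteq> 0 \<or> t \<noteq> 0" "s * (s^2 * \<beta> + t^2 * \<delta>) = t * (s^2 * \<alpha> + t^2 * \<gamma>)"
  proof (cases "\<beta> = 0")
    case True
    then show ?thesis using that[of 1 0] by simp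
  next
    case False
    then have "0 < degree [:-\<gamma>, \<delta>, -\<alpha>, \<beta>:]" by simp
    then obtain s where "poly [:-\<gamma>, \<delta>, -\<alpha>, \<beta>:] s = 0" using cl unfolding alg_closed_def by blast
    then show ?thesis using that[of s 1] by (simp add: algebra_simps power2_eq_square)
  qed
  define A where "A = addp (scal s P) (scal t R)"
  have A0: "A \<noteq> (0,0,0)"
    using st(1) PR(3) unfolding A_def indep_iff_cross_nonzero[symmetric] indep_def by blast
  have WA: "wmap F A = addp (scal (s^2 * \<alpha> + t^2 * \<gamma>) P) (scal (s^2 * \<beta> + t^2 * \<delta>) R)"
    unfolding A_def wmap_addp[OF c2] wmap_scal WP WR by (simp add: pt_simps algebra_simps)
  have "cross A (wmap F A) = (0,0,0)"
    unfolding WA unfolding A_def cross_lin_comb using st(2) by (simp add: scal_zero)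
  then have "evf F 4 A \<noteq> 0" using nonsingular_off_curve[OF c2 ns A0] by blast
  moreover have "dot L A = 0" unfolding A_def using PR by (simp add: dot_addp_right dot_scal_right)
  ultimately show ?thesis by blast
qed

lemma bitangent_iff_eigenline:
  fixes F :: "_ \<Rightarrow> 'a::field"
  assumes cl: "alg_closed TYPE('a)" and c2: "(2::'a) = 0" and ns: "nonsingular_quartic F"
  shows "is_bitangent F L \<longleftrightarrow> eigenline F L"
  using bitangent_eigenline[OF alg_closed_infinite[OF cl] c2] eigenline_bitangent[OF cl c2]
    eigenline_not_component[OF cl c2 ns] by blast

lemma two_bitangents_eigenlines:
  fixes F :: "_ \<Rightarrow> 'a::field"
  assumes cl: "alg_closed TYPE('a)" and c2: "(2::'a) = 0" and ns: "nonsingular_quartic F"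
    and two: "card (bitangents F) = 2"
  obtains l1 l2 where "eigenline F l1" "eigenline F l2" "cross l1 l2 \<noteq> (0,0,0)"
    "\<And>v. eigenline F v \<Longrightarrow> cross v l1 = (0,0,0) \<or> cross v l2 = (0,0,0)"
proof -
  note bitangents_eq = bitangents_def bitangent_iff_eigenline[OF cl c2 ns]
  obtain x y where xy: "bitangents F = {x, y}" "x \<noteq> y" using two card_2_iff by metis
  then have "x \<in> bitangents F" "y \<in> bitangents F" by auto
  then obtain l1 l2 where l: "x = line_set l1" "y = line_set l2" "eigenline F l1" "eigenline F l2"
    unfolding bitangents_eq by blast
  then have nz: "l1 \<noteq> (0,0,0)" "l2 \<noteq> (0,0,0)" unfolding eigenline_def by auto
  have "cross v l1 = (0,0,0) \<or> cross v l2 = (0,0,0)" if v: "eigenline F v" for v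
  proof -
    have "line_set v \<in> bitangents F" using v unfolding bitangents_eq by blast
    then have "line_set v = line_set l1 \<or> line_set v = line_set l2" using xy l by auto
    moreover have "v \<noteq> (0,0,0)" using v unfolding eigenline_def by blast
    ultimately show ?thesis using line_set_eq_iff nz by blast
  qed
  moreover have "cross l1 l2 \<noteq> (0,0,0)" using line_set_eq_iff[OF nz] xy(2) l(1,2) by blast
  ultimately show ?thesis using that l(3,4) by blast
qed

section \<open>A frame adapted to two eigenlines\<close>

lemma third_eigenline:
  fixes F :: "_ \<Rightarrow> 'a::field"
  assumes c2: "(2::'a) = 0" and l1: "wadj F l1 = scal \<mu>1 (sq l1)" and l2: "wadj F l2 = scal \<mu>2 (sq l2)"
    and c: "cross l1 l2 \<noteq> (0,0,0)" and same: "\<mu>1 = 0 \<longleftrightarrow> \<mu>2 = 0"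
  obtains v where "eigenline F v" "cross v l1 \<noteq> (0,0,0)" "cross v l2 \<noteq> (0,0,0)"
proof -
  \<comment> \<open>for \<mu>1 = \<mu>2 = 0 any v in the pencil is an eigenline; otherwise v = \<mu>1 l1 + \<mu>2 l2 is one\<close>
  define c1 c2' where "c1 = (if \<mu>1 = 0 then 1 else \<mu>1)" and "c2' = (if \<mu>2 = 0 then 1 else \<mu>2)"
  define v where "v = addp (scal c1 l1) (scal c2' l2)"
  have c0: "c1 \<noteq> 0" "c2' \<noteq> 0" unfolding c1_def c2'_def by auto
  have "\<exists>\<gamma>. wadj F v = scal \<gamma> (sq v)"
  proof (cases "\<mu>1 = 0")
    case True
    then have "wadj F v = scal 0 (sq v)"
      using same by (simp add: v_def wadj_addp wadj_scal l1 l2 scal_zero addp_zero)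
    then show ?thesis ..
  next
    case False
    then have "wadj F v = scal 1 (sq v)"
      using same by (simp add: v_def c1_def c2'_def wadj_addp wadj_scal l1 l2 sq_addp[OF c2] sq_scal
          scal_scal scal_one power2_eq_square)
    then show ?thesis ..
  qed
  moreover have "v \<noteq> (0,0,0)"
    using c c0 unfolding v_def indep_iff_cross_nonzero[symmetric] indep_def by blast
  moreover have "cross v l1 = scal c2' (cross l2 l1)" "cross v l2 = scal c1 (cross l1 l2)"
    unfolding v_def by (simp_all add: pt_simps algebra_simps)
  ultimately show ?thesis
    using that c0 c cross_swap_nonzero[OF c] unfolding eigenline_def by (metis scal_eq_zero_iff)
qed

lemma eigenvector_in_coset:
  fixes F :: "_ \<Rightarrow> 'a::field"
  assumes cl: "alg_closed TYPE('a)" and c2: "(2::'a) = 0"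
    and a: "wadj F a = sq a" and b: "wadj F b = (0,0,0)"
    and m: "wadj F m = addp (addp (scal \<alpha> (sq a)) (scal \<beta> (sq b))) (scal \<gamma> (sq m))" and "\<gamma> \<noteq> 0"
  obtains v where "wadj F v = scal \<gamma> (sq v)" "det a b v = det a b m"
proof -
  have "0 < degree [:\<alpha>, 1, \<gamma>:]" using \<open>\<gamma> \<noteq> 0\<close> by simp
  then obtain s where "poly [:\<alpha>, 1, \<gamma>:] s = 0" using cl unfolding alg_closed_def by blast
  then have "\<gamma> * s^2 = - (\<alpha> + s)" by (simp add: algebra_simps power2_eq_square eq_neg_iff_add_eq_0)
  then have s: "\<gamma> * s^2 = \<alpha> + s" by (simp add: char2_uminus[OF c2])
  obtain r where "r^2 = \<beta> / \<gamma>" using alg_closed_sqrt[OF cl] by blast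
  then have r: "\<gamma> * r^2 = \<beta>" using \<open>\<gamma> \<noteq> 0\<close> by simp
  define v where "v = addp (addp m (scal s a)) (scal r b)"
  have "wadj F v = addp (addp (scal (\<alpha> + s) (sq a)) (scal \<beta> (sq b))) (scal \<gamma> (sq m))"
    unfolding v_def wadj_addp wadj_scal a b m by (simp add: pt_simps algebra_simps)
  also have "\<dots> = scal \<gamma> (sq v)"
    unfolding s[symmetric] r[symmetric] v_def sq_addp[OF c2] sq_scal by (simp add: pt_simps algebra_simps)
  finally show ?thesis
    using that by (simp add: v_def det_addp_right det_scal_right det_self13 det_self23)
qed

lemma frame_completion:
  fixes F :: "_ \<Rightarrow> 'a::field"
  assumes cl: "alg_closed TYPE('a)" and c2: "(2::'a) = 0"
    and a: "wadj F a = sq a" and b: "wadj F b = (0,0,0)" and ab: "cross a b \<noteq> (0,0,0)"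
    and only: "\<And>v. eigenline F v \<Longrightarrow> det a b v = 0"
  obtains m \<beta> where "wadj F m = scal \<beta> (sq b)" "\<beta> \<noteq> 0" "det a b m \<noteq> 0"
proof -
  obtain m0 where m0: "det a b m0 \<noteq> 0" using exists_det_nonzero[OF ab] by blast
  then have "det (sq a) (sq b) (sq m0) \<noteq> 0" by (simp add: det_sq[OF c2])
  then obtain \<alpha> \<beta> \<gamma> where m0_eq: "wadj F m0 = addp (addp (scal \<alpha> (sq a)) (scal \<beta> (sq b))) (scal \<gamma> (sq m0))"
    using span3 by blast
  have no_eigen: False if "wadj F v = scal \<mu> (sq v)" "det a b v = det a b m0" for v \<mu>
    using only[of v] that m0 det_nonzero[of a b v] unfolding eigenline_def by auto
  have \<gamma>: "\<gamma> = 0" using eigenvector_in_coset[OF cl c2 a b m0_eq] no_eigen by blast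
  define m where "m = addp m0 (scal \<alpha> a)"
  have "wadj F m = addp (addp (scal \<alpha> (sq a)) (scal \<alpha> (sq a))) (scal \<beta> (sq b))"
    unfolding m_def wadj_addp wadj_scal a m0_eq \<gamma> by (simp add: pt_simps algebra_simps)
  then have m_eq: "wadj F m = scal \<beta> (sq b)" by (simp add: addp_self[OF c2] addp_zero)
  have det_m: "det a b m = det a b m0" unfolding m_def det_addp_right det_scal_right det_self13 by simp
  have "\<beta> \<noteq> 0"
  proof
    assume "\<beta> = 0"
    then show False using no_eigen[of m 0] m_eq det_m by (simp add: scal_zero)
  qed
  then show ?thesis using that m_eq m0 det_m by simp
qed

lemma eigenline_frame:
  fixes F :: "_ \<Rightarrow> 'a::field"
  assumes cl: "alg_closed TYPE('a)" and c2: "(2::'a) = 0"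
    and e1: "eigenline F l1" and e2: "eigenline F l2" and c: "cross l1 l2 \<noteq> (0,0,0)"
    and only: "\<And>v. eigenline F v \<Longrightarrow> cross v l1 = (0,0,0) \<or> cross v l2 = (0,0,0)"
  obtains a b m \<beta> where "wadj F a = sq a" "wadj F b = (0,0,0)" "wadj F m = scal \<beta> (sq b)"
    "\<beta> \<noteq> 0" "det a b m \<noteq> 0"
proof -
  obtain \<mu>1 \<mu>2 where \<mu>: "wadj F l1 = scal \<mu>1 (sq l1)" "wadj F l2 = scal \<mu>2 (sq l2)"
    using e1 e2 unfolding eigenline_def by blast
  have one_zero: "\<mu>1 = 0 \<longleftrightarrow> \<mu>2 \<noteq> 0"
    using third_eigenline[OF c2 \<mu> c] only by blast
  \<comment> \<open>exactly one of the two eigenvalues vanishes; rescale the other eigenline to eigenvalue 1\<close>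
  obtain l l' \<mu> where l: "wadj F l = scal \<mu> (sq l)" "\<mu> \<noteq> 0" "wadj F l' = (0,0,0)"
      "cross l l' \<noteq> (0,0,0)" "\<And>v. eigenline F v \<Longrightarrow> cross v l = (0,0,0) \<or> cross v l' = (0,0,0)"
  proof (cases "\<mu>1 = 0")
    case True
    show ?thesis
    proof (rule that[of l2 \<mu>2 l1])
      show "\<And>v. eigenline F v \<Longrightarrow> cross v l2 = (0,0,0) \<or> cross v l1 = (0,0,0)" using only by blast
    qed (use True one_zero \<mu> cross_swap_nonzero[OF c] in \<open>simp_all add: scal_zero\<close>)
  next
    case False
    show ?thesis
    proof (rule that[of l1 \<mu>1 l2])
      show "\<And>v. eigenline F v \<Longrightarrow> cross v l1 = (0,0,0) \<or> cross v l2 = (0,0,0)" using only by blast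
    qed (use False one_zero \<mu> c in \<open>simp_all add: scal_zero\<close>)
  qed
  define a where "a = scal \<mu> l"
  have a: "wadj F a = sq a"
    unfolding a_def wadj_scal l(1) sq_scal scal_scal by (simp add: power2_eq_square)
  have a_l': "cross a l' \<noteq> (0,0,0)" unfolding a_def cross_scal_left using l(2,4) by (simp add: scal_eq_zero_iff)
  have "l \<noteq> (0,0,0)" "l' \<noteq> (0,0,0)" using l(4) by (auto simp: pt_simps)
  then have det_zero: "det a l' v = 0" if "eigenline F v" for v
    using det_zero_if_parallel[OF l(5)[OF that]] unfolding a_def det_scal_left by simp
  obtain m \<beta> where "wadj F m = scal \<beta> (sq l')" "\<beta> \<noteq> 0" "det a l' m \<noteq> 0"
    using frame_completion[OF cl c2 a l(3) a_l' det_zero] .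
  then show ?thesis using that a l(3) by blast
qed

locale eigen_frame =
  fixes F :: "nat \<times> nat \<times> nat \<Rightarrow> 'a::field" and a b m :: "'a pt" and \<beta> :: 'a
  assumes char2: "(2::'a) = 0"
    and wadj_a: "wadj F a = sq a" and wadj_b: "wadj F b = (0,0,0)" and wadj_m: "wadj F m = scal \<beta> (sq b)"
    and beta_nonzero: "\<beta> \<noteq> 0" and det_frame: "det a b m \<noteq> 0"
begin

abbreviation "D \<equiv> det a b m"

definition "q1 = cross b m"
definition "q2 = cross m a"
definition "q3 = cross a b"

lemma dot_dual_frame:
  "dot a q1 = D" "dot b q1 = 0" "dot m q1 = 0"
  "dot a q2 = 0" "dot b q2 = D" "dot m q2 = 0"
  "dot a q3 = 0" "dot b q3 = 0" "dot m q3 = D"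
  unfolding q1_def q2_def q3_def by (simp_all add: pt_simps algebra_simps)

lemma dot_a_wmap: "dot a (wmap F X) = (dot a X)^2"
  unfolding dot_wmap wadj_a dot_sq[OF char2] ..

lemma dot_b_wmap: "dot b (wmap F X) = 0"
  unfolding dot_wmap wadj_b by (simp add: pt_simps)

lemma dot_m_wmap: "dot m (wmap F X) = \<beta> * (dot b X)^2"
  unfolding dot_wmap wadj_m dot_scal_left dot_sq[OF char2] ..

lemma wmap_b_perp: "dot b Y = 0 \<Longrightarrow> wmap F Y = scal ((dot a Y)^2 / D) q1"
  by (rule eq_if_dot_frame_eq[OF det_frame])
     (use det_frame in \<open>simp_all add: dot_a_wmap dot_b_wmap dot_m_wmap dot_scal_right dot_dual_frame\<close>)

lemma wmap_q1: "wmap F q1 = scal D q1"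
  using wmap_b_perp[OF dot_dual_frame(2)] det_frame by (simp add: dot_dual_frame power2_eq_square)

lemma wmap_q2: "wmap F q2 = scal (\<beta> * D) q3"
  by (rule eq_if_dot_frame_eq[OF det_frame])
     (simp_all add: dot_a_wmap dot_b_wmap dot_m_wmap dot_scal_right dot_dual_frame power2_eq_square)

lemma wmap_q3: "wmap F q3 = (0,0,0)"
  using wmap_b_perp[OF dot_dual_frame(8)] by (simp add: dot_dual_frame scal_zero)

lemma cross_q1_q3: "cross q1 q3 \<noteq> (0,0,0)"
proof
  assume "cross q1 q3 = (0,0,0)"
  then have "det q2 q1 q3 = 0" by (simp add: det_def pt_simps)
  then show False
    using det_cross_cross[of b m a] det_frame det_swap12[of q2 q1 q3] by (simp add: q1_def q2_def q3_def)
qed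

lemma dual_frame_nonzero: "q1 \<noteq> (0,0,0)" "q3 \<noteq> (0,0,0)" "b \<noteq> (0,0,0)"
  using cross_q1_q3 det_frame by (auto simp: pt_simps)

end

section \<open>Descent to the finite field\<close>

definition pt_in :: "'a set \<Rightarrow> 'a pt \<Rightarrow> bool" where
  "pt_in k v \<longleftrightarrow> px v \<in> k \<and> py v \<in> k \<and> pz v \<in> k"

context
  fixes k :: "'a::field set"
  assumes sf: "is_subfield k"
begin

lemma subfield_0: "0 \<in> k" and subfield_1: "1 \<in> k"
  using sf unfolding is_subfield_def by auto

lemma subfield_add: "x \<in> k \<Longrightarrow> y \<in> k \<Longrightarrow> x + y \<in> k"
  and subfield_mult: "x \<in> k \<Longrightarrow> y \<in> k \<Longrightarrow> x * y \<in> k"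
  and subfield_uminus: "x \<in> k \<Longrightarrow> - x \<in> k"
  using sf unfolding is_subfield_def by auto

lemma subfield_diff: "x \<in> k \<Longrightarrow> y \<in> k \<Longrightarrow> x - y \<in> k"
  using subfield_add subfield_uminus by (metis diff_conv_add_uminus)

lemma subfield_inverse: "x \<in> k \<Longrightarrow> inverse x \<in> k"
  using sf unfolding is_subfield_def by (cases "x = 0") auto

lemma subfield_divide: "x \<in> k \<Longrightarrow> y \<in> k \<Longrightarrow> x / y \<in> k"
  using subfield_mult subfield_inverse by (simp add: divide_inverse)

lemma subfield_power: "x \<in> k \<Longrightarrow> x ^ n \<in> k"
  by (induction n) (auto intro: subfield_1 subfield_mult)

lemmas subfield_closed = subfield_0 subfield_1 subfield_add subfield_mult subfield_uminus
  subfield_diff subfield_inverse subfield_divide subfield_power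

lemma pt_in_addp: "pt_in k u \<Longrightarrow> pt_in k v \<Longrightarrow> pt_in k (addp u v)"
  and pt_in_scal: "c \<in> k \<Longrightarrow> pt_in k v \<Longrightarrow> pt_in k (scal c v)"
  and pt_in_cross: "pt_in k u \<Longrightarrow> pt_in k v \<Longrightarrow> pt_in k (cross u v)"
  and pt_in_sq: "pt_in k u \<Longrightarrow> pt_in k (sq u)"
  and pt_in_pair_prods: "pt_in k u \<Longrightarrow> pt_in k (pair_prods u)"
  and pt_in_dot: "pt_in k u \<Longrightarrow> pt_in k v \<Longrightarrow> dot u v \<in> k"
  and pt_in_std_basis: "pt_in k (1,0,0)" "pt_in k (0,1,0)" "pt_in k (0,0,1)"
  by (simp_all add: pt_in_def pt_simps subfield_closed)

lemma pt_in_det: "pt_in k u \<Longrightarrow> pt_in k v \<Longrightarrow> pt_in k w \<Longrightarrow> det u v w \<in> k"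
  by (simp add: det_def pt_in_dot pt_in_cross)

lemma pt_in_wmap: "\<forall>m. F m \<in> k \<Longrightarrow> pt_in k v \<Longrightarrow> pt_in k (wmap F v)"
  and pt_in_wrows: "\<forall>m. F m \<in> k \<Longrightarrow> pt_in k (wrow1 F) \<and> pt_in k (wrow2 F) \<and> pt_in k (wrow3 F)"
  and qpart_in: "\<forall>m. F m \<in> k \<Longrightarrow> pt_in k u \<Longrightarrow> qpart F u \<in> k"
  by (simp_all add: pt_in_def form_simps pt_simps subfield_closed)

lemma ratio_in_subfield:
  assumes "pt_in k u" "pt_in k v" "v \<noteq> (0,0,0)" "u = scal \<alpha> v"
  shows "\<alpha> \<in> k"
proof -
  consider "px v \<noteq> 0" | "py v \<noteq> 0" | "pz v \<noteq> 0" using assms(3) by (auto simp: pt_eq_iff)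
  then show ?thesis
  proof cases
    case 1
    then have "\<alpha> = px u / px v" using assms(4) by (simp add: scal_eq)
    then show ?thesis using assms(1,2) by (simp add: pt_in_def subfield_closed)
  next
    case 2
    then have "\<alpha> = py u / py v" using assms(4) by (simp add: scal_eq)
    then show ?thesis using assms(1,2) by (simp add: pt_in_def subfield_closed)
  next
    case 3
    then have "\<alpha> = pz u / pz v" using assms(4) by (simp add: scal_eq)
    then show ?thesis using assms(1,2) by (simp add: pt_in_def subfield_closed)
  qed
qed

lemma coords_in_subfield:
  assumes "pt_in k u" "pt_in k a" "pt_in k b" "cross a b \<noteq> (0,0,0)" "u = addp (scal s a) (scal t b)"
  shows "s \<in> k" "t \<in> k"
proof -
  have "cross u b = scal s (cross a b)" "cross a u = scal t (cross a b)"
    unfolding assms(5) by (simp_all add: pt_simps algebra_simps)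
  then show "s \<in> k" "t \<in> k" using ratio_in_subfield pt_in_cross assms(1-4) by blast+
qed

lemma finite_char2_sqrt:
  assumes fin: "finite k" and c2: "(2::'a) = 0" and x: "x \<in> k"
  obtains y where "y \<in> k" "y^2 = x"
proof -
  have "(\<lambda>y. y^2) ` k \<subseteq> k" using subfield_power by auto
  moreover have "inj_on (\<lambda>y::'a. y^2) k" by (rule inj_onI) (use char2_power2_inj[OF c2] in blast)
  ultimately have "(\<lambda>y. y^2) ` k = k" using endo_inj_surj[OF fin] by blast
  then show ?thesis using x that by (metis imageE)
qed

lemma finite_char2_scaled_sqrt:
  assumes fin: "finite k" and c2: "(2::'a) = 0" and T: "T \<in> k" "T \<noteq> 0" and A: "A \<in> k"
  obtains r where "r \<in> k" "T * r^2 = A"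
proof -
  obtain r where "r \<in> k" "r^2 = A / T"
    using finite_char2_sqrt[OF fin c2] subfield_divide[OF A T(1)] by blast
  then show ?thesis using that T(2) by simp
qed

lemma finite_char2_sq_surj:
  assumes fin: "finite k" and c2: "(2::'a) = 0" and r: "pt_in k r"
  obtains c where "pt_in k c" "sq c = r"
proof -
  obtain y1 y2 y3 where "y1 \<in> k" "y1^2 = px r" "y2 \<in> k" "y2^2 = py r" "y3 \<in> k" "y3^2 = pz r"
    using finite_char2_sqrt[OF fin c2] r unfolding pt_in_def by metis
  then show ?thesis using that[of "(y1, y2, y3)"] by (simp add: pt_in_def sq_def)
qed

end

lemma cross_wmap:
  "cross (wmap F X) (wmap F Y) =
    (dot (cross (wrow2 F) (wrow3 F)) (cross (sq X) (sq Y)),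
     dot (cross (wrow3 F) (wrow1 F)) (cross (sq X) (sq Y)),
     dot (cross (wrow1 F) (wrow2 F)) (cross (sq X) (sq Y)))"
  by (simp add: wmap_def pt_simps algebra_simps)

lemma rational_kernel_direction:
  fixes k :: "'a::field set"
  assumes cl: "alg_closed TYPE('a)" and c2: "(2::'a) = 0" and sf: "is_subfield k" and fin: "finite k"
    and r: "pt_in k r" "pt_in k r'" "cross r r' \<noteq> (0,0,0)"
    and q: "q \<noteq> (0,0,0)" "dot r (sq q) = 0" "dot r' (sq q) = 0"
  obtains c \<rho> where "pt_in k c" "\<rho> \<noteq> 0" "c = scal \<rho> q"
proof -
  obtain \<kappa> where \<kappa>: "sq q = scal \<kappa> (cross r r')"
    using normal_parallel_cross[OF _ _ r(3)] q(2,3) by (metis dot_commute)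
  have "\<kappa> \<noteq> 0" using \<kappa> sq_nonzero[OF q(1)] by (auto simp: scal_zero)
  obtain c where c: "pt_in k c" "sq c = cross r r'"
    using finite_char2_sq_surj[OF sf fin c2 pt_in_cross[OF sf r(1,2)]] by blast
  obtain \<rho> where \<rho>: "\<rho>^2 = inverse \<kappa>" using alg_closed_sqrt[OF cl] by blast
  have "sq (scal \<rho> q) = sq c"
    unfolding sq_scal \<rho> \<kappa> c scal_scal using \<open>\<kappa> \<noteq> 0\<close> by (simp add: scal_one)
  then have "c = scal \<rho> q" using sq_inj[OF c2] by metis
  moreover have "\<rho> \<noteq> 0" using \<rho> \<open>\<kappa> \<noteq> 0\<close> by auto
  ultimately show ?thesis using that c(1) by blast
qed

locale rational_eigen_frame = eigen_frame F a b m \<beta>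
  for F :: "nat \<times> nat \<times> nat \<Rightarrow> 'a::field" and a b m \<beta> +
  fixes k :: "'a set"
  assumes closed: "alg_closed TYPE('a)" and subfield: "is_subfield k" and finite_k: "finite k"
    and coeffs: "\<forall>m. F m \<in> k"
begin

lemma rational_q3:
  obtains c3 \<rho> where "pt_in k c3" "\<rho> \<noteq> 0" "c3 = scal \<rho> q3"
proof -
  have ker: "dot (wrow1 F) (sq q3) = 0" "dot (wrow2 F) (sq q3) = 0" "dot (wrow3 F) (sq q3) = 0"
    using wmap_q3 unfolding wmap_def by simp_all
  have "cross (wmap F q1) (wmap F q2) = scal (D * (\<beta> * D)) (cross q1 q3)"
    unfolding wmap_q1 wmap_q2 cross_scal_left cross_scal_right scal_scal by (simp add: mult_ac)
  then have "cross (wmap F q1) (wmap F q2) \<noteq> (0,0,0)"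
    using det_frame beta_nonzero cross_q1_q3 by (simp add: scal_eq_zero_iff)
  then consider "cross (wrow2 F) (wrow3 F) \<noteq> (0,0,0)" | "cross (wrow3 F) (wrow1 F) \<noteq> (0,0,0)"
    | "cross (wrow1 F) (wrow2 F) \<noteq> (0,0,0)"
    unfolding cross_wmap by (force simp: dot_def)
  then show ?thesis
  proof cases
    case 1
    then show ?thesis using rational_kernel_direction[OF closed char2 subfield finite_k _ _ 1
        dual_frame_nonzero(2) ker(2,3)] pt_in_wrows[OF subfield coeffs] that by blast
  next
    case 2
    then show ?thesis using rational_kernel_direction[OF closed char2 subfield finite_k _ _ 2
        dual_frame_nonzero(2) ker(3,1)] pt_in_wrows[OF subfield coeffs] that by blast
  next
    case 3
    then show ?thesis using rational_kernel_direction[OF closed char2 subfield finite_k _ _ 3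
        dual_frame_nonzero(2) ker(1,2)] pt_in_wrows[OF subfield coeffs] that by blast
  qed
qed

lemma rational_q1:
  obtains c1 \<kappa> \<alpha> where "pt_in k c1" "\<kappa> \<noteq> 0" "c1 = scal \<kappa> q1" "\<alpha> \<in> k" "\<alpha> \<noteq> 0"
    "wmap F c1 = scal \<alpha> c1"
proof -
  \<comment> \<open>wmap F \<circ> wmap F maps everything onto the line of q1 and is nonzero on q1,
    so it is nonzero on some standard basis vector\<close>
  have "wmap F (wmap F q1) = scal (D^2 * D) q1" unfolding wmap_q1 wmap_scal scal_scal ..
  then have nz: "wmap F (wmap F q1) \<noteq> (0,0,0)"
    using det_frame dual_frame_nonzero(1) by (simp add: scal_eq_zero_iff)
  have expand: "wmap F (wmap F q1) = addp (addp (scal ((px q1^2)^2) (wmap F (wmap F (1,0,0))))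
      (scal ((py q1^2)^2) (wmap F (wmap F (0,1,0))))) (scal ((pz q1^2)^2) (wmap F (wmap F (0,0,1))))"
    by (subst wmap_std_basis[OF char2]) (simp only: wmap_comb3[OF char2])
  have "\<exists>e. pt_in k e \<and> wmap F (wmap F e) \<noteq> (0,0,0)"
  proof (rule ccontr)
    assume "\<not> ?thesis"
    then have "wmap F (wmap F (1,0,0)) = (0,0,0)" "wmap F (wmap F (0,1,0)) = (0,0,0)"
      "wmap F (wmap F (0,0,1)) = (0,0,0)" using pt_in_std_basis[OF subfield] by blast+
    then show False using nz unfolding expand by (simp add: scal_zero addp_zero)
  qed
  then obtain e where e: "pt_in k e" "wmap F (wmap F e) \<noteq> (0,0,0)" by blast
  define c1 where "c1 = wmap F (wmap F e)"
  define \<kappa> where "\<kappa> = (dot a (wmap F e))^2 / D"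
  have c1: "pt_in k c1" unfolding c1_def using pt_in_wmap[OF subfield coeffs] e(1) by blast
  have c1_q1: "c1 = scal \<kappa> q1" unfolding c1_def \<kappa>_def using wmap_b_perp[OF dot_b_wmap] .
  have "\<kappa> \<noteq> 0" using e(2) c1_q1 unfolding c1_def by (auto simp: scal_zero)
  have wmap_c1: "wmap F c1 = scal (\<kappa> * D) c1"
    unfolding c1_q1 wmap_scal wmap_q1 scal_scal by (simp add: power2_eq_square mult_ac)
  have "\<kappa> * D \<in> k"
    using ratio_in_subfield[OF subfield pt_in_wmap[OF subfield coeffs c1] c1 _ wmap_c1] e(2)
    unfolding c1_def by blast
  then show ?thesis using that c1 \<open>\<kappa> \<noteq> 0\<close> c1_q1 wmap_c1 det_frame by simp
qed

end

lemma det_nonzero_if_wmap_chain: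
  fixes F :: "_ \<Rightarrow> 'a::field"
  assumes c2: "(2::'a) = 0" and W: "wmap F c1 = scal \<alpha> c1" "\<alpha> \<noteq> 0" "wmap F c3 = (0,0,0)"
    "wmap F v = scal t c3" "t \<noteq> 0" and c13: "cross c1 c3 \<noteq> (0,0,0)"
  shows "det c1 v c3 \<noteq> 0"
proof
  assume "det c1 v c3 = 0"
  moreover have "det c1 c3 v = - det c1 v c3" by (simp add: pt_simps algebra_simps)
  ultimately have "det c1 c3 v = 0" by simp
  then obtain p q where "v = addp (scal p c1) (scal q c3)"
    using span2_if_det_zero[OF c13] by blast
  then have "scal t c3 = scal (p^2 * \<alpha>) c1"
    using W by (simp add: wmap_addp[OF c2] wmap_scal scal_scal scal_zero addp_zero)
  then have "cross (scal t c3) c1 = (0,0,0)" by (simp add: cross_scal_left cross_self scal_zero)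
  then show False using W(5) cross_swap_nonzero[OF c13] by (simp add: cross_scal_left scal_eq_zero_iff)
qed

context rational_eigen_frame
begin

lemma exists_basis_wmap_not_parallel:
  assumes "\<kappa> \<noteq> 0"
  obtains e where "pt_in k e" "cross (wmap F e) (scal \<kappa> q1) \<noteq> (0,0,0)"
proof -
  have "cross (wmap F q2) (scal \<kappa> q1) = scal (\<beta> * D * \<kappa>) (cross q3 q1)"
    unfolding wmap_q2 cross_scal_left cross_scal_right scal_scal by (simp add: mult_ac)
  then have nz: "cross (wmap F q2) (scal \<kappa> q1) \<noteq> (0,0,0)"
    using assms beta_nonzero det_frame cross_swap_nonzero[OF cross_q1_q3] by (simp add: scal_eq_zero_iff)
  have "\<exists>e. pt_in k e \<and> cross (wmap F e) (scal \<kappa> q1) \<noteq> (0,0,0)"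
  proof (rule ccontr)
    assume "\<not> ?thesis"
    then have "cross (wmap F (1,0,0)) (scal \<kappa> q1) = (0,0,0)" "cross (wmap F (0,1,0)) (scal \<kappa> q1) = (0,0,0)"
      "cross (wmap F (0,0,1)) (scal \<kappa> q1) = (0,0,0)" using pt_in_std_basis[OF subfield] by blast+
    then have "cross (wmap F q2) (scal \<kappa> q1) = (0,0,0)"
      by (subst wmap_std_basis[OF char2]) (simp add: cross_addp_left cross_scal_left scal_zero addp_zero)
    then show False using nz by contradiction
  qed
  then show ?thesis using that by blast
qed

lemma rational_normal_frame:
  obtains C1 C2 C3 t where "pt_in k C1" "pt_in k C2" "pt_in k C3" "t \<in> k" "t \<noteq> 0"
    "wmap F C1 = scal t C1" "wmap F C2 = scal t C3" "wmap F C3 = (0,0,0)" "det C1 C2 C3 \<noteq> 0"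
proof -
  obtain c3 \<rho> where c3: "pt_in k c3" "\<rho> \<noteq> 0" "c3 = scal \<rho> q3" using rational_q3 .
  obtain c1 \<kappa> \<alpha> where c1: "pt_in k c1" "\<kappa> \<noteq> 0" "c1 = scal \<kappa> q1" "\<alpha> \<in> k" "\<alpha> \<noteq> 0"
      "wmap F c1 = scal \<alpha> c1" using rational_q1 .
  have wmap_c3: "wmap F c3 = (0,0,0)" unfolding c3(3) wmap_scal wmap_q3 scal_zero ..
  have "cross c1 c3 = scal (\<kappa> * \<rho>) (cross q1 q3)"
    unfolding c1(3) c3(3) cross_scal_left cross_scal_right scal_scal by (simp add: mult_ac)
  then have c13: "cross c1 c3 \<noteq> (0,0,0)" using cross_q1_q3 c1(2) c3(2) by (simp add: scal_eq_zero_iff)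
  obtain e where e: "pt_in k e" "cross (wmap F e) c1 \<noteq> (0,0,0)"
    using exists_basis_wmap_not_parallel[OF c1(2)] c1(3) by blast
  \<comment> \<open>wmap F e lies in the plane dot b _ = 0, spanned by c1 and c3\<close>
  have "det c1 c3 (wmap F e) = 0"
    using det_on_line[OF dual_frame_nonzero(3) _ _ dot_b_wmap] c1(3) c3(3)
    by (simp add: dot_scal_right dot_dual_frame)
  then obtain s t where st: "wmap F e = addp (scal s c1) (scal t c3)" using span2_if_det_zero[OF c13] by blast
  have "s \<in> k" "t \<in> k"
    using coords_in_subfield[OF subfield pt_in_wmap[OF subfield coeffs e(1)] c1(1) c3(1) c13 st] by auto
  have "t \<noteq> 0" using e(2) unfolding st by (auto simp: pt_simps algebra_simps)
  \<comment> \<open>adding \<sigma> c1 with \<alpha> \<sigma>^2 = s kills the c1-component\<close>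
  obtain \<sigma> where \<sigma>: "\<sigma> \<in> k" "\<sigma>^2 = s / \<alpha>"
    using finite_char2_sqrt[OF subfield finite_k char2] subfield_divide[OF subfield \<open>s \<in> k\<close> c1(4)] by blast
  define C2 where "C2 = addp e (scal \<sigma> c1)"
  have "wmap F C2 = addp (scal t c3) (addp (scal s c1) (scal s c1))"
    unfolding C2_def wmap_addp[OF char2] wmap_scal st c1(6) \<sigma>(2) scal_scal
    using c1(5) by (simp add: pt_simps algebra_simps)
  then have wmap_C2: "wmap F C2 = scal t c3" by (simp add: addp_self[OF char2] addp_zero)
  define C1 where "C1 = scal (t / \<alpha>) c1"
  have wmap_C1: "wmap F C1 = scal t C1"
    unfolding C1_def wmap_scal c1(6) scal_scal using c1(5) by (simp add: power2_eq_square field_simps)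
  have "det C1 C2 c3 \<noteq> 0"
    using det_nonzero_if_wmap_chain[OF char2 c1(6,5) wmap_c3 wmap_C2 \<open>t \<noteq> 0\<close> c13] c1(5) \<open>t \<noteq> 0\<close>
    by (simp add: C1_def det_scal_left)
  moreover have "pt_in k C1" "pt_in k C2"
    unfolding C1_def C2_def using c1(1,4) \<open>t \<in> k\<close> e(1) \<sigma>(1)
    by (simp_all add: pt_in_scal[OF subfield] pt_in_addp[OF subfield] subfield_divide[OF subfield])
  ultimately show ?thesis using that c3(1) \<open>t \<in> k\<close> \<open>t \<noteq> 0\<close> wmap_C1 wmap_C2 wmap_c3 by blast
qed

end

section \<open>The normal form\<close>

lemma qpart_comb3: "qpart F (addp (addp (scal x U1) (scal y U2)) (scal z U3)) =
   x^2 * qpart F U1 + y^2 * qpart F U2 + z^2 * qpart F U3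
   + x*y * (qpart F (addp U1 U2) - qpart F U1 - qpart F U2)
   + x*z * (qpart F (addp U1 U3) - qpart F U1 - qpart F U3)
   + y*z * (qpart F (addp U2 U3) - qpart F U2 - qpart F U3)"
  by (simp add: form_simps pt_simps algebra_simps power2_eq_square)

lemma dot_pair_prods_comb3:
  assumes "(2::'a::comm_ring_1) = 0"
  shows "dot (pair_prods (addp (addp (scal x C1) (scal y C2)) (scal z C3))) (c::'a pt) =
    x^2 * dot (pair_prods C1) c + y^2 * dot (pair_prods C2) c + z^2 * dot (pair_prods C3) c
    + x*y * dot (cross C1 C2) c + x*z * dot (cross C1 C3) c + y*z * dot (cross C2 C3) c"
  by (simp add: pt_simps char2_diff[OF assms] algebra_simps power2_eq_square)

lemma evf_normal_frame:
  fixes F :: "_ \<Rightarrow> 'a::field"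
  assumes c2: "(2::'a) = 0" and W: "wmap F C1 = scal t C1" "wmap F C2 = scal t C3" "wmap F C3 = (0,0,0)"
  shows "evf F 4 (addp (addp (scal x C1) (scal y C2)) (scal z C3)) =
    (qpart F (sq C1) + t * dot (pair_prods C1) C1) * x^4
    + (qpart F (sq C2) + t * dot (pair_prods C2) C3) * y^4 + qpart F (sq C3) * z^4
    + (qpart F (addp (sq C1) (sq C2)) - qpart F (sq C1) - qpart F (sq C2)
       + t * dot (pair_prods C2) C1 + t * dot (pair_prods C1) C3) * (x^2*y^2)
    + (qpart F (addp (sq C1) (sq C3)) - qpart F (sq C1) - qpart F (sq C3)
       + t * dot (pair_prods C3) C1) * (x^2*z^2)
    + (qpart F (addp (sq C2) (sq C3)) - qpart F (sq C2) - qpart F (sq C3)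
       + t * dot (pair_prods C3) C3) * (y^2*z^2)
    + t * det C1 C2 C3 * (x^2*y*z + x*y^3)" (is "_ = ?R")
proof -
  let ?X = "addp (addp (scal x C1) (scal y C2)) (scal z C3)"
  have sq_X: "sq ?X = addp (addp (scal (x^2) (sq C1)) (scal (y^2) (sq C2))) (scal (z^2) (sq C3))"
    by (simp add: sq_addp[OF c2] sq_scal)
  have wmap_X: "wmap F ?X = addp (scal (t * x^2) C1) (scal (t * y^2) C3)"
    unfolding wmap_comb3[OF c2] W by (simp add: pt_simps algebra_simps)
  have d: "dot (cross C1 C2) C1 = 0" "dot (cross C1 C3) C1 = 0" "dot (cross C2 C3) C1 = det C1 C2 C3"
     "dot (cross C1 C2) C3 = det C1 C2 C3" "dot (cross C1 C3) C3 = 0" "dot (cross C2 C3) C3 = 0"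
    by (simp_all add: pt_simps algebra_simps)
  have "evf F 4 ?X = qpart F (sq ?X) + t * x^2 * dot (pair_prods ?X) C1 + t * y^2 * dot (pair_prods ?X) C3"
    unfolding evf_4_decomp wmap_X dot_addp_right dot_scal_right by simp
  also have "\<dots> = ?R"
    unfolding sq_X qpart_comb3 dot_pair_prods_comb3[OF c2] d
    by (simp add: algebra_simps power2_eq_square power3_eq_cube power4_eq_xxxx)
  finally show ?thesis .
qed

lemma char2_square_quadratic_form:
  fixes a b c d e f x y z :: "'a::comm_ring_1"
  assumes "(2::'a) = 0"
  shows "(a*x^2 + b*y^2 + c*z^2 + d*x*y + e*y*z + f*z*x)^2 =
    a^2*x^4 + b^2*y^4 + c^2*z^4 + d^2*(x^2*y^2) + e^2*(y^2*z^2) + f^2*(x^2*z^2)"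
  by (simp add: char2_power2_add[OF assms] power_mult_distrib power_mult[symmetric] algebra_simps)

definition col_mat :: "'a pt \<Rightarrow> 'a pt \<Rightarrow> 'a pt \<Rightarrow> nat \<Rightarrow> nat \<Rightarrow> 'a" where
  "col_mat C1 C2 C3 i j =
    (let C = (if j = 0 then C1 else if j = 1 then C2 else C3)
     in if i = 0 then px C else if i = 1 then py C else pz C)"

lemma det3_col_mat: "det3 (col_mat C1 C2 C3) = det C1 C2 C3"
  by (simp add: det3_def col_mat_def pt_simps algebra_simps)

lemma mapply_col_mat: "mapply (col_mat C1 C2 C3) (x, y, z) = addp (addp (scal x C1) (scal y C2)) (scal z C3)"
  by (simp add: col_mat_def pt_simps algebra_simps)

lemma col_mat_in: "pt_in k C1 \<Longrightarrow> pt_in k C2 \<Longrightarrow> pt_in k C3 \<Longrightarrow> col_mat C1 C2 C3 i j \<in> k"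
  by (simp add: col_mat_def pt_in_def Let_def)

lemma evf_normal_frame_over_subfield:
  fixes F :: "_ \<Rightarrow> 'a::field" and k :: "'a set"
  assumes c2: "(2::'a) = 0" and sf: "is_subfield k" and coeffs: "\<forall>m. F m \<in> k"
    and C: "pt_in k C1" "pt_in k C2" "pt_in k C3" and t: "t \<in> k"
    and W: "wmap F C1 = scal t C1" "wmap F C2 = scal t C3" "wmap F C3 = (0,0,0)"
  obtains A1 A2 A3 A12 A13 A23
  where "A1 \<in> k" "A2 \<in> k" "A3 \<in> k" "A12 \<in> k" "A13 \<in> k" "A23 \<in> k"
    "\<And>x y z. evf F 4 (addp (addp (scal x C1) (scal y C2)) (scal z C3)) =
       A1 * x^4 + A2 * y^4 + A3 * z^4 + A12 * (x^2*y^2) + A13 * (x^2*z^2) + A23 * (y^2*z^2)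
       + t * det C1 C2 C3 * (x^2*y*z + x*y^3)"
proof
  show "qpart F (sq C1) + t * dot (pair_prods C1) C1 \<in> k"
    "qpart F (sq C2) + t * dot (pair_prods C2) C3 \<in> k" "qpart F (sq C3) \<in> k"
    "qpart F (addp (sq C1) (sq C2)) - qpart F (sq C1) - qpart F (sq C2)
       + t * dot (pair_prods C2) C1 + t * dot (pair_prods C1) C3 \<in> k"
    "qpart F (addp (sq C1) (sq C3)) - qpart F (sq C1) - qpart F (sq C3) + t * dot (pair_prods C3) C1 \<in> k"
    "qpart F (addp (sq C2) (sq C3)) - qpart F (sq C2) - qpart F (sq C3) + t * dot (pair_prods C3) C3 \<in> k"
    using C t by (simp_all add: subfield_closed[OF sf] qpart_in[OF sf coeffs] pt_in_sq[OF sf]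
        pt_in_addp[OF sf] pt_in_dot[OF sf] pt_in_pair_prods[OF sf])
qed (rule evf_normal_frame[OF c2 W])

lemma normal_form_from_frame:
  fixes F :: "_ \<Rightarrow> 'a::field" and k :: "'a set"
  assumes c2: "(2::'a) = 0" and sf: "is_subfield k" and fin: "finite k" and coeffs: "\<forall>m. F m \<in> k"
    and ns: "nonsingular_quartic F"
    and C: "pt_in k C1" "pt_in k C2" "pt_in k C3" and t: "t \<in> k" "t \<noteq> 0"
    and W: "wmap F C1 = scal t C1" "wmap F C2 = scal t C3" "wmap F C3 = (0,0,0)"
    and det_C: "det C1 C2 C3 \<noteq> 0"
  obtains a b c d e f where "a \<in> k" "b \<in> k" "c \<in> k" "d \<in> k" "e \<in> k" "f \<in> k" "a * c \<noteq> 0"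
    "\<And>x y z. evf F 4 (addp (addp (scal x C1) (scal y C2)) (scal z C3)) =
       t * det C1 C2 C3 * ((a*x^2 + b*y^2 + c*z^2 + d*x*y + e*y*z + f*z*x)^2 - x*y*(y^2 + x*z))"
proof -
  define T where "T = t * det C1 C2 C3"
  have T: "T \<in> k" "T \<noteq> 0"
    unfolding T_def using t det_C pt_in_det[OF sf C] subfield_mult[OF sf] by auto
  obtain A1 A2 A3 A12 A13 A23 where A: "A1 \<in> k" "A2 \<in> k" "A3 \<in> k" "A12 \<in> k" "A13 \<in> k" "A23 \<in> k"
    and evf_eq: "\<And>x y z. evf F 4 (addp (addp (scal x C1) (scal y C2)) (scal z C3)) =
       A1 * x^4 + A2 * y^4 + A3 * z^4 + A12 * (x^2*y^2) + A13 * (x^2*z^2) + A23 * (y^2*z^2)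
       + T * (x^2*y*z + x*y^3)"
    using evf_normal_frame_over_subfield[OF c2 sf coeffs C t(1) W] unfolding T_def by blast
  \<comment> \<open>every element of k is a square, so the part of F in x^2, y^2, z^2 is T times the square of
    a quadratic form over k\<close>
  obtain a b c d e f where abc: "a \<in> k" "b \<in> k" "c \<in> k" "d \<in> k" "e \<in> k" "f \<in> k"
    and sq: "T * a^2 = A1" "T * b^2 = A2" "T * c^2 = A3" "T * d^2 = A12" "T * e^2 = A23" "T * f^2 = A13"
    using finite_char2_scaled_sqrt[OF sf fin c2 T] A by metis
  have normal: "evf F 4 (addp (addp (scal x C1) (scal y C2)) (scal z C3)) =
      T * ((a*x^2 + b*y^2 + c*z^2 + d*x*y + e*y*z + f*z*x)^2 - x*y*(y^2 + x*z))" for x y z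
    unfolding evf_eq char2_square_quadratic_form[OF c2] char2_diff[OF c2] sq[symmetric]
    by (simp add: algebra_simps power2_eq_square power3_eq_cube)
  have "cross C1 (wmap F C1) = (0,0,0)" "cross C3 (wmap F C3) = (0,0,0)"
    unfolding W(1,3) by (simp_all add: pt_simps)
  then have "evf F 4 C1 \<noteq> 0" "evf F 4 C3 \<noteq> 0"
    using nonsingular_off_curve[OF c2 ns] det_nonzero[OF det_C] by blast+
  moreover have "evf F 4 C1 = T * a^2" "evf F 4 C3 = T * c^2"
    using normal[of 1 0 0] normal[of 0 0 1] by (simp_all add: pt_simps)
  ultimately have "a * c \<noteq> 0" by auto
  then show ?thesis using that abc normal unfolding T_def by blast
qed

theorem proposition2p3:
  fixes k :: "'K::field set" and F :: "nat \<times> nat \<times> nat \<Rightarrow> 'K"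
  assumes closed: "alg_closed TYPE('K)"
    and char2: "(2::'K) = 0"
    and subf: "is_subfield k" and fin: "finite k"
    and alg: "\<forall>x::'K. algebraic_over k x"
    and quartic: "is_form 4 F" and coeffs: "\<forall>m. F m \<in> k"
    and nonsing: "nonsingular_quartic F"
    and two: "card (bitangents F) = 2"
  shows "\<exists>M. (\<forall>i j. M i j \<in> k) \<and> det3 M \<noteq> 0 \<and>
           (\<exists>a\<in>k. \<exists>b\<in>k. \<exists>c\<in>k. \<exists>d\<in>k. \<exists>e\<in>k. \<exists>f\<in>k. a * c \<noteq> 0 \<and>
             (\<exists>t. t \<noteq> 0 \<and>
               (\<forall>x y z. evf F 4 (mapply M (x, y, z)) =
                  t * ((a*x^2 + b*y^2 + c*z^2 + d*x*y + e*y*z + f*z*x)^2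
                       - x*y*(y^2 + x*z)))))"
proof -
  obtain l1 l2 where "eigenline F l1" "eigenline F l2" "cross l1 l2 \<noteq> (0,0,0)"
      "\<And>v. eigenline F v \<Longrightarrow> cross v l1 = (0,0,0) \<or> cross v l2 = (0,0,0)"
    using two_bitangents_eigenlines[OF closed char2 nonsing two] by blast
  then obtain a b m \<beta> where frame: "wadj F a = sq a" "wadj F b = (0,0,0)" "wadj F m = scal \<beta> (sq b)"
      "\<beta> \<noteq> 0" "det a b m \<noteq> 0"
    using eigenline_frame[OF closed char2] by metis
  interpret rational_eigen_frame F a b m \<beta> k
    by unfold_locales (use frame char2 closed subf fin coeffs in auto)
  obtain C1 C2 C3 t where C: "pt_in k C1" "pt_in k C2" "pt_in k C3" "t \<in> k" "t \<noteq> 0"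
      "wmap F C1 = scal t C1" "wmap F C2 = scal t C3" "wmap F C3 = (0,0,0)" and det_C: "det C1 C2 C3 \<noteq> 0"
    using rational_normal_frame .
  obtain a b c d e f where coeffs_k: "a \<in> k" "b \<in> k" "c \<in> k" "d \<in> k" "e \<in> k" "f \<in> k" "a * c \<noteq> 0"
    and normal: "\<And>x y z. evf F 4 (addp (addp (scal x C1) (scal y C2)) (scal z C3)) =
       t * det C1 C2 C3 * ((a*x^2 + b*y^2 + c*z^2 + d*x*y + e*y*z + f*z*x)^2 - x*y*(y^2 + x*z))"
    using normal_form_from_frame[OF char2 subf fin coeffs nonsing C det_C] by blast
  have "\<forall>x y z. evf F 4 (mapply (col_mat C1 C2 C3) (x, y, z)) =
      t * det C1 C2 C3 * ((a*x^2 + b*y^2 + c*z^2 + d*x*y + e*y*z + f*z*x)^2 - x*y*(y^2 + x*z))"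
    by (simp only: mapply_col_mat normal simp_thms)
  moreover have "\<forall>i j. col_mat C1 C2 C3 i j \<in> k" using col_mat_in C(1-3) by blast
  moreover have "det3 (col_mat C1 C2 C3) \<noteq> 0" "t * det C1 C2 C3 \<noteq> 0"
    using det_C C(5) by (simp_all add: det3_col_mat)
  ultimately show ?thesis using coeffs_k by blast
qed

end
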